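(* Let $s\in\mathbb N$ and $f\in C^\infty([0,1]^s)$ satisfy $\|f^{|\boldsymbol\kappa|}\|_1\le K_1\alpha^{\|\boldsymbol\kappa\|_0}$ for all $\boldsymbol k\in\mathbb N_0^s$, for some positive constants $K_1,\alpha$. Let $N_m$ be as in the context and $\mathrm{SUM}_{2,m}=\sum_{\boldsymbol k\in\mathbb N_*^s\setminus Q_{N_m}}Z(\boldsymbol k)S(\boldsymbol k)\hat f(\boldsymbol k)$. Then there exist a constant $D_1$ and a threshold $\underline m_1$ depending on $s$ and $\alpha$ such that for all $m\ge\underline m_1$, $$|\mathrm{SUM}_{2,m}|\le\sum_{\boldsymbol k\in\mathbb N_*^s\setminus Q_{N_m}}|\hat f(\boldsymbol k)|<K_12^{-N_m+D_1\sqrt{N_m}}.$$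
   Context: Binary digits: for $k\in\mathbb N_0$, $k=\sum_{\ell\ge1}a_\ell2^{\ell-1}$, $\vec k=(a_1,a_2,\dots)$, $\kappa=\{\ell:a_\ell=1\}$; $\vec x$ the binary digits of $x\in[0,1)$. For $\boldsymbol k\in\mathbb N_0^s$ with digit sets $\boldsymbol\kappa$, $\|\boldsymbol\kappa\|_1=\sum_j\sum_{\ell\in\kappa_j}\ell$, $\|\boldsymbol\kappa\|_0=\sum_j|\kappa_j|$; $\mathbb N_*^s=\mathbb N_0^s\setminus\{\boldsymbol0\}$, $Q_N=\{\boldsymbol k\in\mathbb N_*^s:\|\boldsymbol\kappa\|_1\le N\}$; $\hat f(\boldsymbol k)=\int f(\boldsymbol x)(-1)^{\sum_j\vec k_j^{\mathsf T}\vec x_j}\mathrm d\boldsymbol x$; $f^{|\boldsymbol\kappa|}=\partial^{\|\boldsymbol\kappa\|_0}f/\partial x_1^{|\kappa_1|}\cdots\partial x_s^{|\kappa_s|}$; $\|\cdot\|_1$ the $L^1$ norm. $\oplus$ is componentwise bitwise XOR on $\mathbb N_0^s$; $\lambda=3(\log2)^2/\pi^2$. Constants: $A_s,B_s>0$ depend only on $s$ and satisfy: for all $N\ge1$, $r\ge2$, if $\boldsymbol k_1,\dots,\boldsymbol k_r$ are i.i.d. uniform on $Q_N$ then $\Pr(\oplus_i\boldsymbol k_i\in Q_N)\le A_s^rN^{r/4}r^{-B_s\sqrt N}$. $c_s=\frac14B_s\sqrt{\lambda/s}$, $N_m=\sup\{N\in\mathbb N_0:|Q_N|\le c_sm2^m\}$.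 $Z(\boldsymbol k)\in\{0,1\}$ and $S(\boldsymbol k)\in\{-1,1\}$ are the random variables $Z(\boldsymbol k)=\mathbf 1\{\sum_j\sum_{\ell\in\kappa_j}C_j(\ell,:)=\boldsymbol0\bmod2\}$, $S(\boldsymbol k)=(-1)^{\sum_j\vec k_j^{\mathsf T}\vec D_j}$ attached to random generating matrices $C_j\in\{0,1\}^{\infty\times m}$ and digital shifts $\vec D_j\in\{0,1\}^\infty$ of a randomized base-2 digital net with $2^m$ points. *)

theory Defs
  imports "HOL-Analysis.Analysis"
begin

text \<open>Digit set of k: kappa k = {l >= 1. the l-th binary digit a_l of k is 1},
  where k = sum_{l>=1} a_l 2^(l-1).\<close>
definition kappa :: "nat \<Rightarrow> nat set" where
  "kappa k = {l. 1 \<le> l \<and> bit k (l - 1)}"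

definition xdig :: "real \<Rightarrow> nat \<Rightarrow> nat" where
  "xdig x l = nat \<lfloor>2 ^ l * x\<rfloor> mod 2"

text \<open>Multi-indices in N_0^s are functions nat => nat vanishing outside {..<s}.\<close>
definition idx :: "nat \<Rightarrow> (nat \<Rightarrow> nat) set" where
  "idx s = {k. \<forall>j\<ge>s. k j = 0}"

definition Nstar :: "nat \<Rightarrow> (nat \<Rightarrow> nat) set" where
  "Nstar s = {k \<in> idx s. \<exists>j<s. k j \<noteq> 0}"

definition norm1 :: "nat \<Rightarrow> (nat \<Rightarrow> nat) \<Rightarrow> nat" where
  "norm1 s k = (\<Sum>j<s. \<Sum>l\<in>kappa (k j). l)"

definition norm0 :: "nat \<Rightarrow> (nat \<Rightarrow> nat) \<Rightarrow> nat" where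
  "norm0 s k = (\<Sum>j<s. card (kappa (k j)))"

definition Q :: "nat \<Rightarrow> nat \<Rightarrow> (nat \<Rightarrow> nat) set" where
  "Q s N = {k \<in> Nstar s. norm1 s k \<le> N}"

fun xor_all :: "(nat \<Rightarrow> nat \<Rightarrow> nat) \<Rightarrow> nat \<Rightarrow> nat \<Rightarrow> nat" where
  "xor_all t 0 = (\<lambda>j. 0)"
| "xor_all t (Suc i) = (\<lambda>j. xor (xor_all t i j) (t i j))"

text \<open>Pr(xor of r i.i.d. uniform elements of Q_N lies in Q_N).\<close>
definition xor_prob :: "nat \<Rightarrow> nat \<Rightarrow> nat \<Rightarrow> real" where
  "xor_prob s N r =
     real (card {t \<in> PiE {..<r} (\<lambda>_. Q s N). xor_all t r \<in> Q s N})
     / real (card (Q s N)) ^ r"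

definition AB_ok :: "nat \<Rightarrow> real \<Rightarrow> real \<Rightarrow> bool" where
  "AB_ok s A B \<longleftrightarrow> A > 0 \<and> B > 0 \<and>
     (\<forall>N r. N \<ge> 1 \<longrightarrow> r \<ge> 2 \<longrightarrow>
        xor_prob s N r \<le> A ^ r * real N powr (real r / 4) * real r powr (- B * sqrt (real N)))"

definition lam :: real where
  "lam = 3 * (ln 2)^2 / pi^2"

definition c_s :: "nat \<Rightarrow> real \<Rightarrow> real" where
  "c_s s B = 1/4 * B * sqrt (lam / real s)"

definition Nm :: "nat \<Rightarrow> real \<Rightarrow> nat \<Rightarrow> nat" where
  "Nm s B m = Sup {N. real (card (Q s N)) \<le> c_s s B * real m * 2 ^ m}"

text \<open>Points of [0,1]^s are extensional functions on {..<s}.\<close>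
definition cube :: "nat \<Rightarrow> (nat \<Rightarrow> real) set" where
  "cube s = PiE {..<s} (\<lambda>_. {0..1})"

definition cube_measure :: "nat \<Rightarrow> (nat \<Rightarrow> real) measure" where
  "cube_measure s = PiM {..<s} (\<lambda>_. restrict_space lborel {0..1})"

definition walsh :: "nat \<Rightarrow> (nat \<Rightarrow> nat) \<Rightarrow> (nat \<Rightarrow> real) \<Rightarrow> real" where
  "walsh s k x = (-1) ^ (\<Sum>j<s. \<Sum>l\<in>kappa (k j). xdig (x j) l)"

definition fhat :: "nat \<Rightarrow> ((nat \<Rightarrow> real) \<Rightarrow> real) \<Rightarrow> (nat \<Rightarrow> nat) \<Rightarrow> real" where
  "fhat s f k = (\<integral>x. f x * walsh s k x \<partial>cube_measure s)"

definition L1norm :: "nat \<Rightarrow> ((nat \<Rightarrow> real) \<Rightarrow> real) \<Rightarrow> real" where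
  "L1norm s g = (\<integral>x. \<bar>g x\<bar> \<partial>cube_measure s)"

text \<open>Partial derivative in coordinate j (one-sided at the boundary of [0,1]).\<close>
definition partial :: "nat \<Rightarrow> ((nat \<Rightarrow> real) \<Rightarrow> real) \<Rightarrow> (nat \<Rightarrow> real) \<Rightarrow> real" where
  "partial j g x = vector_derivative (\<lambda>t. g (x(j := t))) (at (x j) within {0..1})"

fun iter_partial :: "nat list \<Rightarrow> ((nat \<Rightarrow> real) \<Rightarrow> real) \<Rightarrow> (nat \<Rightarrow> real) \<Rightarrow> real" where
  "iter_partial [] g = g"
| "iter_partial (j # js) g = partial j (iter_partial js g)"

definition smooth_cube :: "nat \<Rightarrow> ((nat \<Rightarrow> real) \<Rightarrow> real) \<Rightarrow> bool" where
  "smooth_cube s f \<longleftrightarrow>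
     (\<forall>js. set js \<subseteq> {..<s} \<longrightarrow>
        continuous_on (cube s) (iter_partial js f) \<and>
        (\<forall>j<s. \<forall>x\<in>cube s.
           (\<lambda>t. iter_partial js f (x(j := t))) differentiable (at (x j) within {0..1})))"

text \<open>f^{|kappa|}: derivative of order |kappa_j| in coordinate j.\<close>
definition mixed_deriv :: "nat \<Rightarrow> (nat \<Rightarrow> nat) \<Rightarrow> ((nat \<Rightarrow> real) \<Rightarrow> real) \<Rightarrow> (nat \<Rightarrow> real) \<Rightarrow> real" where
  "mixed_deriv s k f =
     iter_partial (concat (map (\<lambda>j. replicate (card (kappa (k j))) j) [0..<s])) f"

text \<open>C j l c: entry (row l >= 1, column c < m) of generating matrix C_j;
  D j l: l-th digit of the shift D_j.\<close>
definition Zk :: "nat \<Rightarrow> nat \<Rightarrow> (nat \<Rightarrow> nat \<Rightarrow> nat \<Rightarrow> bool) \<Rightarrow> (nat \<Rightarrow> nat) \<Rightarrow> real" where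
  "Zk s m C k = (if \<forall>c<m. even (card {(j, l). j < s \<and> l \<in> kappa (k j) \<and> C j l c})
                 then 1 else 0)"

definition Sk :: "nat \<Rightarrow> (nat \<Rightarrow> nat \<Rightarrow> bool) \<Rightarrow> (nat \<Rightarrow> nat) \<Rightarrow> real" where
  "Sk s D k = (-1) ^ card {(j, l). j < s \<and> l \<in> kappa (k j) \<and> D j l}"

end

theory Submission
  imports Defs "HOL-Probability.Probability"
begin

text \<open>
  Let j be the first coordinate with k_j > 0. Halving k_j corresponds, on the function side, to
  folding f into (f(x_j/2) + sigma f((1+x_j)/2))/2 with sigma = (-1)^(k_j mod 2): the Walsh
  coefficient does not change, every derivative in direction j that is still needed gains a
  factor 1/2 by the chain rule, and when the lowest digit of k_j is 1 the fold is a difference,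
  which the fundamental theorem of calculus bounds by half the L1 norm of one more derivative in
  direction j. Iterating the fold until k = 0 gives
  |fhat k| <= 2^(-norm1 k) * ||f^(|kappa|)||_1.

  For the tail over norm1 k > N we use Rankin's trick with y = 2^(-1/sqrt N). The weights then
  factor over coordinates and binary digits:
  sum_k alpha^(norm0 k) y^(norm1 k) = (prod_l (1 + alpha y^l))^s <= exp (alpha y/(1-y))^s
  <= 2^(s alpha sqrt N / (ln 2)^2). The random factors Z and S have modulus at most 1, and
  N_m >= 1 once m is large because |Q_N| >= N.
\<close>

section \<open>Binary digits\<close>

lemma kappa_subset_atLeastAtMost: "kappa n \<subseteq> {1..n}"
proof
  fix l assume "l \<in> kappa n"
  then have l: "1 \<le> l" "bit n (l - 1)" by (auto simp: kappa_def)
  have "l - 1 < 2 ^ (l - 1)" by simp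
  moreover have "\<not> n < 2 ^ (l - 1)" using l(2) by (auto simp: bit_iff_odd)
  ultimately have "l - 1 < n" by linarith
  then show "l \<in> {1..n}" using l(1) by auto
qed

lemma finite_kappa [simp]: "finite (kappa n)"
  using kappa_subset_atLeastAtMost finite_subset by blast

lemma kappa_0 [simp]: "kappa 0 = {}"
  by (auto simp: kappa_def)

lemma kappa_ge_1: "l \<in> kappa n \<Longrightarrow> 1 \<le> l"
  by (auto simp: kappa_def)

lemma kappa_power_of_two: "1 \<le> l \<Longrightarrow> kappa (2 ^ (l - 1)) = {l}"
  by (auto simp: kappa_def bit_exp_iff)

lemma kappa_halve: "kappa n = (if odd n then {1} else {}) \<union> Suc ` kappa (n div 2)"
proof -
  have "l \<in> kappa n \<longleftrightarrow> l \<in> (if odd n then {1} else {}) \<union> Suc ` kappa (n div 2)" for l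
  proof (cases l)
    case (Suc l')
    then show ?thesis
      by (cases l') (auto simp: kappa_def bit_0 bit_Suc image_iff)
  qed (auto simp: kappa_def)
  then show ?thesis by blast
qed

lemma sum_kappa_halve:
  "(\<Sum>l\<in>kappa n. g l) = (if odd n then g 1 else 0) + (\<Sum>l\<in>kappa (n div 2). g (Suc l))"
proof -
  have "1 \<notin> Suc ` kappa (n div 2)" using kappa_ge_1 by fastforce
  then have "(\<Sum>l\<in>kappa n. g l) = (\<Sum>l\<in>(if odd n then {1} else {}). g l) + (\<Sum>l\<in>Suc ` kappa (n div 2). g l)"
    by (subst kappa_halve, subst sum.union_disjoint) auto
  then show ?thesis by (simp add: sum.reindex)
qed

lemma card_kappa_halve: "card (kappa n) = n mod 2 + card (kappa (n div 2))"
  using sum_kappa_halve[of "\<lambda>_. 1::nat" n] by (simp add: odd_iff_mod_2_eq_one)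

lemma sum_kappa_halve_id:
  "(\<Sum>l\<in>kappa n. l) = n mod 2 + (\<Sum>l\<in>kappa (n div 2). l) + card (kappa (n div 2))"
  using sum_kappa_halve[of "\<lambda>l. l" n] sum_Suc[of "\<lambda>l. l"] by (simp add: odd_iff_mod_2_eq_one)

lemma less_power_of_two_if_kappa_le:
  assumes "\<forall>l\<in>kappa n. l \<le> N"
  shows "n < 2 ^ N"
proof -
  have "\<not> bit n p" if "N \<le> p" for p
    using assms that by (auto simp: kappa_def)
  then have "take_bit N n = n"
    by (intro bit_eqI) (metis bit_take_bit_iff not_le)
  then show ?thesis by (simp add: take_bit_nat_eq_self_iff)
qed

lemma xdig_half_Suc: "xdig (y / 2) (Suc l) = xdig y l"
proof -
  have "(2::real) ^ Suc l * (y / 2) = 2 ^ l * y" by simp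
  then show ?thesis unfolding xdig_def by presburger
qed

lemma xdig_half_shift_Suc:
  assumes "0 \<le> y" "1 \<le> l"
  shows "xdig ((1 + y) / 2) (Suc l) = xdig y l"
proof -
  have "(2::real) ^ Suc l * ((1 + y) / 2) = of_int (2 ^ l) + 2 ^ l * y" by (simp add: field_simps)
  then have "\<lfloor>(2::real) ^ Suc l * ((1 + y) / 2)\<rfloor> = 2 ^ l + \<lfloor>(2::real) ^ l * y\<rfloor>"
    by (simp only: floor_add_int) simp
  moreover have "\<lfloor>(2::real) ^ l * y\<rfloor> \<ge> 0" using assms by simp
  ultimately have "nat \<lfloor>(2::real) ^ Suc l * ((1 + y) / 2)\<rfloor> = 2 ^ l + nat \<lfloor>(2::real) ^ l * y\<rfloor>"
    by (simp add: nat_add_distrib nat_power_eq)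
  moreover have "(2::nat) ^ l mod 2 = 0" using assms by (cases l) auto
  ultimately show ?thesis unfolding xdig_def by (simp add: mod_add_eq[symmetric])
qed

lemma xdig_half_1: "0 \<le> y \<Longrightarrow> y < 1 \<Longrightarrow> xdig (y / 2) 1 = 0"
  by (simp add: xdig_def floor_eq_iff)

lemma xdig_half_shift_1:
  assumes "0 \<le> y" "y < 1"
  shows "xdig ((1 + y) / 2) 1 = 1"
proof -
  have "\<lfloor>(2::real) ^ 1 * ((1 + y) / 2)\<rfloor> = 1" using assms by (simp add: floor_eq_iff)
  then show ?thesis unfolding xdig_def by simp
qed

lemma sum_kappa_xdig_half:
  assumes "0 \<le> y" "y < 1"
  shows "(\<Sum>l\<in>kappa n. xdig (y / 2) l) = (\<Sum>l\<in>kappa (n div 2). xdig y l)"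
  using sum_kappa_halve[of "\<lambda>l. xdig (y / 2) l" n] xdig_half_1[OF assms]
  by (simp only: xdig_half_Suc) simp

lemma sum_kappa_xdig_half_shift:
  assumes "0 \<le> y" "y < 1"
  shows "(\<Sum>l\<in>kappa n. xdig ((1 + y) / 2) l) = n mod 2 + (\<Sum>l\<in>kappa (n div 2). xdig y l)"
proof -
  have "(\<Sum>l\<in>kappa (n div 2). xdig ((1 + y) / 2) (Suc l)) = (\<Sum>l\<in>kappa (n div 2). xdig y l)"
    using assms by (intro sum.cong) (auto dest: kappa_ge_1 simp: xdig_half_shift_Suc)
  then show ?thesis
    using sum_kappa_halve[of "\<lambda>l. xdig ((1 + y) / 2) l" n] xdig_half_shift_1[OF assms]
    by (simp add: odd_iff_mod_2_eq_one)
qed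

text \<open>shrink j c moves x_j into the half of [0,1] whose first binary digit is c.\<close>

definition shrink :: "nat \<Rightarrow> real \<Rightarrow> (nat \<Rightarrow> real) \<Rightarrow> nat \<Rightarrow> real" where
  "shrink j c x = x(j := (c + x j) / 2)"

lemma walsh_shrink_0:
  assumes "j < s" "0 \<le> x j" "x j < 1"
  shows "walsh s k (shrink j 0 x) = walsh s (k(j := k j div 2)) x"
proof -
  have "(\<Sum>l\<in>kappa (k i). xdig (shrink j 0 x i) l) = (\<Sum>l\<in>kappa ((k(j := k j div 2)) i). xdig (x i) l)"
    for i
    using assms by (cases "i = j") (simp_all add: shrink_def sum_kappa_xdig_half)
  then show ?thesis unfolding walsh_def by simp
qed

lemma walsh_shrink_1:
  assumes "j < s" "0 \<le> x j" "x j < 1"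
  shows "walsh s k (shrink j 1 x) = (-1) ^ (k j mod 2) * walsh s (k(j := k j div 2)) x"
proof -
  let ?k' = "k(j := k j div 2)"
  have "(\<Sum>i<s. \<Sum>l\<in>kappa (k i). xdig (shrink j 1 x i) l)
      = (\<Sum>l\<in>kappa (k j). xdig ((1 + x j) / 2) l) + (\<Sum>i\<in>{..<s}-{j}. \<Sum>l\<in>kappa (k i). xdig (x i) l)"
    using assms by (subst sum.remove[of _ j]) (auto simp: shrink_def intro!: sum.cong)
  also have "\<dots> = k j mod 2 + ((\<Sum>l\<in>kappa (?k' j). xdig (x j) l) + (\<Sum>i\<in>{..<s}-{j}. \<Sum>l\<in>kappa (?k' i). xdig (x i) l))"
    using assms by (simp add: sum_kappa_xdig_half_shift)
  also have "(\<Sum>l\<in>kappa (?k' j). xdig (x j) l) + (\<Sum>i\<in>{..<s}-{j}. \<Sum>l\<in>kappa (?k' i). xdig (x i) l)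
      = (\<Sum>i<s. \<Sum>l\<in>kappa (?k' i). xdig (x i) l)"
    using assms by (subst sum.remove[of _ j]) auto
  finally show ?thesis unfolding walsh_def by (simp add: power_add)
qed

lemma norm1_halve:
  assumes "j < s"
  shows "norm1 s k = norm1 s (k(j := k j div 2)) + card (kappa (k j))"
proof -
  have "norm1 s k = (\<Sum>l\<in>kappa (k j). l) + (\<Sum>i\<in>{..<s}-{j}. \<Sum>l\<in>kappa (k i). l)"
    unfolding norm1_def using assms by (subst sum.remove[of _ j]) auto
  moreover have "norm1 s (k(j := k j div 2)) = (\<Sum>l\<in>kappa (k j div 2). l) + (\<Sum>i\<in>{..<s}-{j}. \<Sum>l\<in>kappa (k i). l)"
    unfolding norm1_def using assms by (subst sum.remove[of _ j]) (auto intro!: sum.cong)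
  ultimately show ?thesis using sum_kappa_halve_id[of "k j"] card_kappa_halve[of "k j"] by simp
qed

abbreviation unit_interval_measure :: "real measure" where
  "unit_interval_measure \<equiv> restrict_space lborel {0..1}"

lemma prob_space_unit_interval_measure: "prob_space unit_interval_measure"
  by (rule prob_space_restrict_space) auto

lemma prob_space_cube_measure: "prob_space (cube_measure s)"
  unfolding cube_measure_def by (rule prob_space_PiM) (rule prob_space_unit_interval_measure)

lemma space_cube_measure: "space (cube_measure s) = cube s"
  by (simp add: cube_measure_def cube_def space_PiM space_restrict_space)

lemma cube_component: "x \<in> cube s \<Longrightarrow> i < s \<Longrightarrow> x i \<in> {0..1}"
  unfolding cube_def using PiE_mem[of x "{..<s}" "\<lambda>_. {0..1}" i] by simp

lemma fun_upd_in_cube: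
  assumes "x \<in> PiE I (\<lambda>_. {0..1})" "insert i I = {..<s}" "t \<in> {0..1}"
  shows "x(i := t) \<in> cube s"
proof -
  have "x(i := t) \<in> PiE (insert i I) (\<lambda>_. {0..1})" by (rule PiE_fun_upd[OF assms(3,1)])
  then show ?thesis using assms(2) by (simp add: cube_def)
qed

lemma cube_eq_PiE_UNIV: "cube s = PiE UNIV (\<lambda>i. if i < s then {0..1} else {undefined})"
proof (rule set_eqI)
  fix x :: "nat \<Rightarrow> real"
  have "x \<in> cube s \<longleftrightarrow> (\<forall>i. (i < s \<longrightarrow> x i \<in> {0..1}) \<and> (\<not> i < s \<longrightarrow> x i = undefined))"
    unfolding cube_def PiE_iff extensional_def by auto
  also have "\<dots> \<longleftrightarrow> (\<forall>i. x i \<in> (if i < s then {0..1} else {undefined}))"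
    by (intro iff_allI) simp
  finally show "x \<in> cube s \<longleftrightarrow> x \<in> PiE UNIV (\<lambda>i. if i < s then {0..1} else {undefined})"
    by (simp add: PiE_UNIV_domain Pi_iff)
qed

lemma compact_cube: "compact (cube s)"
proof -
  have "compactin (product_topology (\<lambda>i. euclidean) UNIV)
          (PiE UNIV (\<lambda>i. if i < s then {0..1::real} else {undefined}))"
    by (subst compactin_PiE) auto
  then show ?thesis unfolding cube_eq_PiE_UNIV euclidean_product_topology by simp
qed

lemma measurable_component_cube: "(\<lambda>x. x i) \<in> borel_measurable (cube_measure s)"
proof (cases "i < s")
  case True
  have "(\<lambda>x. x i) \<in> measurable (cube_measure s) unit_interval_measure"
    unfolding cube_measure_def using True by (simp add: measurable_component_singleton)
  moreover have "(\<lambda>y. y) \<in> measurable unit_interval_measure (borel :: real measure)"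
    by (rule measurable_restrict_space1) simp
  ultimately show ?thesis using measurable_comp by (simp add: comp_def)
next
  case False
  then have "(\<lambda>x. x i) \<in> borel_measurable (cube_measure s) \<longleftrightarrow>
      (\<lambda>x. undefined::real) \<in> borel_measurable (cube_measure s)"
    by (intro measurable_cong) (auto simp: space_cube_measure cube_def PiE_iff extensional_def)
  then show ?thesis by simp
qed

lemma borel_measurable_continuous_on_cube:
  fixes g :: "(nat \<Rightarrow> real) \<Rightarrow> real"
  assumes "continuous_on (cube s) g"
  shows "g \<in> borel_measurable (cube_measure s)"
proof -
  have "(\<lambda>x. x) \<in> borel_measurable (cube_measure s)"
    by (rule measurable_coordinatewise_then_product) (rule measurable_component_cube)
  moreover have "(\<lambda>x. indicator (cube s) x *\<^sub>R g x) \<in> borel_measurable borel"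
    using compact_imp_closed[OF compact_cube] assms
    by (intro borel_measurable_continuous_on_indicator) auto
  ultimately have "(\<lambda>x. indicator (cube s) x *\<^sub>R g x) \<in> borel_measurable (cube_measure s)"
    using measurable_comp by (simp add: comp_def)
  moreover have "(\<lambda>x. indicator (cube s) x *\<^sub>R g x) \<in> borel_measurable (cube_measure s) \<longleftrightarrow>
      g \<in> borel_measurable (cube_measure s)"
    by (rule measurable_cong) (simp add: space_cube_measure)
  ultimately show ?thesis by blast
qed

lemma continuous_on_cube_bounded:
  fixes g :: "(nat \<Rightarrow> real) \<Rightarrow> real"
  assumes "continuous_on (cube s) g"
  obtains B where "\<And>x. x \<in> cube s \<Longrightarrow> \<bar>g x\<bar> \<le> B"
proof -
  have "bounded (g ` cube s)"
    using compact_cube assms compact_continuous_image compact_imp_bounded by blast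
  then obtain B where "\<And>y. y \<in> g ` cube s \<Longrightarrow> norm y \<le> B" by (auto simp: bounded_iff)
  then show ?thesis using that by force
qed

lemma integrable_cube_bounded:
  fixes g :: "(nat \<Rightarrow> real) \<Rightarrow> real"
  assumes "g \<in> borel_measurable (cube_measure s)" "\<And>x. x \<in> cube s \<Longrightarrow> \<bar>g x\<bar> \<le> B"
  shows "integrable (cube_measure s) g"
proof -
  interpret prob_space "cube_measure s" by (rule prob_space_cube_measure)
  show ?thesis
    by (rule integrable_const_bound[where B=B]) (use assms in \<open>auto simp: space_cube_measure\<close>)
qed

lemma integrable_continuous_on_cube:
  fixes g :: "(nat \<Rightarrow> real) \<Rightarrow> real"
  assumes "continuous_on (cube s) g"
  shows "integrable (cube_measure s) g"
  using continuous_on_cube_bounded[OF assms]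
    integrable_cube_bounded[OF borel_measurable_continuous_on_cube[OF assms]] by metis

lemma borel_measurable_walsh: "walsh s k \<in> borel_measurable (cube_measure s)"
proof -
  have digit: "(\<lambda>t::real. (-1::real) ^ xdig t l) \<in> borel_measurable borel" for l
    unfolding xdig_def by measurable
  have "walsh s k = (\<lambda>x. \<Prod>i<s. \<Prod>l\<in>kappa (k i). (-1::real) ^ xdig (x i) l)"
    by (rule ext) (simp add: walsh_def power_sum)
  also have "\<dots> \<in> borel_measurable (cube_measure s)"
    by (intro borel_measurable_prod measurable_comp[OF measurable_component_cube digit, unfolded comp_def])
  finally show ?thesis .
qed

lemma abs_walsh [simp]: "\<bar>walsh s k x\<bar> = 1"
  unfolding walsh_def by simp

lemma nn_integral_unit_interval_halves:
  fixes h :: "real \<Rightarrow> ennreal"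
  assumes h: "h \<in> borel_measurable unit_interval_measure"
  shows "(\<integral>\<^sup>+y. h y \<partial>unit_interval_measure) =
    ennreal (1/2) * (\<integral>\<^sup>+y. h (y / 2) \<partial>unit_interval_measure) +
    ennreal (1/2) * (\<integral>\<^sup>+y. h ((1 + y) / 2) \<partial>unit_interval_measure)"
proof -
  define H where "H y = (if y \<in> {0..1} then h y else 0)" for y
  have "(\<lambda>y. if y \<in> {0..1} then h y else 0) \<in> borel_measurable lborel"
    using h by (subst (asm) measurable_restrict_space_iff) auto
  then have [measurable]: "H \<in> borel_measurable borel"
    unfolding H_def[abs_def] by simp
  have restrict: "(\<integral>\<^sup>+y. u y \<partial>unit_interval_measure) = (\<integral>\<^sup>+y. u y * indicator {0..1} y \<partial>lborel)" for u
    by (rule nn_integral_restrict_space) simp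
  have "(\<integral>\<^sup>+y. h y \<partial>unit_interval_measure) = (\<integral>\<^sup>+y. H y \<partial>lborel)"
    unfolding restrict by (rule nn_integral_cong) (simp add: H_def)
  also have "\<dots> = (\<integral>\<^sup>+y. H y * indicator {0..<1/2} y + H y * indicator {1/2..1} y \<partial>lborel)"
    by (rule nn_integral_cong) (auto simp: H_def indicator_def)
  also have "\<dots> = (\<integral>\<^sup>+y. H y * indicator {0..<1/2} y \<partial>lborel) + (\<integral>\<^sup>+y. H y * indicator {1/2..1} y \<partial>lborel)"
    by (rule nn_integral_add) auto
  also have "(\<integral>\<^sup>+y. H y * indicator {0..<1/2} y \<partial>lborel)
      = ennreal \<bar>1/2\<bar> * (\<integral>\<^sup>+y. H (0 + 1/2 * y) * indicator {0..<1/2} (0 + 1/2 * y) \<partial>lborel)"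
    by (rule nn_integral_real_affine) auto
  also have "(\<integral>\<^sup>+y. H (0 + 1/2 * y) * indicator {0..<1/2} (0 + 1/2 * y) \<partial>lborel)
      = (\<integral>\<^sup>+y. h (y / 2) * indicator {0..1} y \<partial>lborel)"
  proof (rule nn_integral_cong_AE)
    show "AE y in lborel. H (0 + 1/2 * y) * indicator {0..<1/2} (0 + 1/2 * y) = h (y / 2) * indicator {0..1} y"
      using AE_lborel_singleton[of 1] by eventually_elim (auto simp: H_def indicator_def)
  qed
  also have "(\<integral>\<^sup>+y. H y * indicator {1/2..1} y \<partial>lborel)
      = ennreal \<bar>1/2\<bar> * (\<integral>\<^sup>+y. H (1/2 + 1/2 * y) * indicator {1/2..1} (1/2 + 1/2 * y) \<partial>lborel)"
    by (rule nn_integral_real_affine) auto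
  also have "(\<integral>\<^sup>+y. H (1/2 + 1/2 * y) * indicator {1/2..1} (1/2 + 1/2 * y) \<partial>lborel)
      = (\<integral>\<^sup>+y. h ((1 + y) / 2) * indicator {0..1} y \<partial>lborel)"
    by (rule nn_integral_cong) (auto simp: H_def indicator_def add_divide_distrib)
  finally show ?thesis unfolding restrict by simp
qed

interpretation unit_cube: product_sigma_finite "\<lambda>_::nat. unit_interval_measure"
  unfolding product_sigma_finite_def
  using prob_space_unit_interval_measure prob_space_imp_sigma_finite by blast

lemma cube_measure_insert:
  "j < s \<Longrightarrow> cube_measure s = PiM (insert j ({..<s} - {j})) (\<lambda>_. unit_interval_measure)"
  unfolding cube_measure_def by (simp add: insert_absorb)

lemma borel_measurable_nn_integral_fun_upd:
  fixes G :: "(nat \<Rightarrow> real) \<Rightarrow> ennreal"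
  assumes "G \<in> borel_measurable (PiM (insert j I) (\<lambda>_. unit_interval_measure))"
  shows "(\<lambda>x. \<integral>\<^sup>+y. G (x(j := y)) \<partial>unit_interval_measure) \<in> borel_measurable (PiM I (\<lambda>_. unit_interval_measure))"
proof -
  have "(\<lambda>p. (fst p)(j := snd p)) \<in>
      measurable (PiM I (\<lambda>_. unit_interval_measure) \<Otimes>\<^sub>M unit_interval_measure) (PiM (insert j I) (\<lambda>_. unit_interval_measure))"
    by (rule measurable_fun_upd[where J=I]) auto
  from measurable_comp[OF this assms]
  have "case_prod (\<lambda>x y. G (x(j := y))) \<in> borel_measurable (PiM I (\<lambda>_. unit_interval_measure) \<Otimes>\<^sub>M unit_interval_measure)"
    by (simp add: comp_def case_prod_beta)
  then show ?thesis
    by (rule sigma_finite_measure.borel_measurable_nn_integral[OF unit_cube.sigma_finite_measures])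
qed

lemma shrink_in_cube:
  assumes "j < s" "0 \<le> c" "c \<le> 1" "x \<in> cube s"
  shows "shrink j c x \<in> cube s"
proof -
  have "(c + x j) / 2 \<in> {0..1}" using cube_component[OF assms(4,1)] assms(2,3) by auto
  then show ?thesis
    unfolding shrink_def using assms(1,4) by (intro fun_upd_in_cube[where I="{..<s}"]) (auto simp: cube_def)
qed

lemma measurable_shrink:
  assumes "j < s" "0 \<le> c" "c \<le> 1"
  shows "shrink j c \<in> measurable (cube_measure s) (cube_measure s)"
  unfolding cube_measure_def
proof (rule measurable_PiM_single')
  fix i assume i: "i \<in> {..<s}"
  show "(\<lambda>x. shrink j c x i) \<in> measurable (PiM {..<s} (\<lambda>_. unit_interval_measure)) unit_interval_measure"
  proof (cases "i = j")
    case True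
    have "(\<lambda>x. (c + x j) / 2) \<in> measurable (PiM {..<s} (\<lambda>_. unit_interval_measure)) unit_interval_measure"
    proof (rule measurable_restrict_space2)
      show "(\<lambda>x. (c + x j) / 2) \<in> measurable (PiM {..<s} (\<lambda>_. unit_interval_measure)) lborel"
        using measurable_component_cube[of j s] unfolding cube_measure_def by measurable
      show "(\<lambda>x. (c + x j) / 2) \<in> space (PiM {..<s} (\<lambda>_. unit_interval_measure)) \<rightarrow> {0..1}"
        using assms by (auto simp: space_cube_measure[unfolded cube_measure_def] dest: cube_component[OF _ assms(1)])
    qed
    then show ?thesis using True by (simp add: shrink_def)
  next
    case False
    then show ?thesis using i by (simp add: shrink_def measurable_component_singleton)
  qed
next
  show "shrink j c \<in> space (PiM {..<s} (\<lambda>_. unit_interval_measure)) \<rightarrow> (\<Pi>\<^sub>E i\<in>{..<s}. space unit_interval_measure)"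
    using shrink_in_cube[OF assms] space_cube_measure[of s] unfolding cube_measure_def
    by (auto simp: space_PiM space_restrict_space cube_def)
qed

lemma nn_integral_shrink:
  fixes g :: "(nat \<Rightarrow> real) \<Rightarrow> ennreal"
  assumes j: "j < s" and g: "g \<in> borel_measurable (cube_measure s)"
  shows "(\<integral>\<^sup>+x. g x \<partial>cube_measure s) =
    ennreal (1/2) * (\<integral>\<^sup>+x. g (shrink j 0 x) \<partial>cube_measure s) +
    ennreal (1/2) * (\<integral>\<^sup>+x. g (shrink j 1 x) \<partial>cube_measure s)"
proof -
  let ?I = "{..<s} - {j}"
  let ?P = "PiM ?I (\<lambda>_. unit_interval_measure)"
  note C = cube_measure_insert[OF j]
  have g': "g \<in> borel_measurable (PiM (insert j ?I) (\<lambda>_. unit_interval_measure))" using g C by simp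
  have gc: "(\<lambda>x. g (shrink j c x)) \<in> borel_measurable (PiM (insert j ?I) (\<lambda>_. unit_interval_measure))"
    if "0 \<le> c" "c \<le> 1" for c
    using measurable_comp[OF measurable_shrink[OF j that] g] C by (simp add: comp_def)
  have shrink_upd: "shrink j c (x(j := y)) = x(j := (c + y) / 2)" for c x y
    by (simp add: shrink_def)
  have "(\<integral>\<^sup>+x. g x \<partial>cube_measure s) = (\<integral>\<^sup>+x. (\<integral>\<^sup>+y. g (x(j := y)) \<partial>unit_interval_measure) \<partial>?P)"
    unfolding C by (rule unit_cube.product_nn_integral_insert) (use g' in auto)
  also have "\<dots> = (\<integral>\<^sup>+x. ennreal (1/2) * (\<integral>\<^sup>+y. g (shrink j 0 (x(j := y))) \<partial>unit_interval_measure)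
                 + ennreal (1/2) * (\<integral>\<^sup>+y. g (shrink j 1 (x(j := y))) \<partial>unit_interval_measure) \<partial>?P)"
  proof (rule nn_integral_cong)
    fix x assume x: "x \<in> space ?P"
    have "(\<lambda>y. g (x(j := y))) \<in> borel_measurable unit_interval_measure"
      using measurable_comp[OF measurable_component_update[OF x, of j] g'] by (simp add: comp_def)
    from nn_integral_unit_interval_halves[OF this]
    show "(\<integral>\<^sup>+y. g (x(j := y)) \<partial>unit_interval_measure) =
        ennreal (1/2) * (\<integral>\<^sup>+y. g (shrink j 0 (x(j := y))) \<partial>unit_interval_measure)
        + ennreal (1/2) * (\<integral>\<^sup>+y. g (shrink j 1 (x(j := y))) \<partial>unit_interval_measure)"
      by (simp add: shrink_upd)
  qed
  also have "\<dots> = ennreal (1/2) * (\<integral>\<^sup>+x. (\<integral>\<^sup>+y. g (shrink j 0 (x(j := y))) \<partial>unit_interval_measure) \<partial>?P)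
                 + ennreal (1/2) * (\<integral>\<^sup>+x. (\<integral>\<^sup>+y. g (shrink j 1 (x(j := y))) \<partial>unit_interval_measure) \<partial>?P)"
    using borel_measurable_nn_integral_fun_upd[OF gc[of 0]] borel_measurable_nn_integral_fun_upd[OF gc[of 1]]
    by (simp add: nn_integral_add nn_integral_cmult)
  also have "\<dots> = ennreal (1/2) * (\<integral>\<^sup>+x. g (shrink j 0 x) \<partial>cube_measure s) +
      ennreal (1/2) * (\<integral>\<^sup>+x. g (shrink j 1 x) \<partial>cube_measure s)"
    using unit_cube.product_nn_integral_insert[OF _ _ gc[of 0]]
      unit_cube.product_nn_integral_insert[OF _ _ gc[of 1]] C by simp
  finally show ?thesis .
qed

lemma integral_shrink_nonneg:
  fixes g :: "(nat \<Rightarrow> real) \<Rightarrow> real"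
  assumes j: "j < s" and g: "g \<in> borel_measurable (cube_measure s)"
    and B: "\<And>x. x \<in> cube s \<Longrightarrow> \<bar>g x\<bar> \<le> B" and nonneg: "\<And>x. x \<in> cube s \<Longrightarrow> 0 \<le> g x"
  shows "(\<integral>x. g x \<partial>cube_measure s) =
    1/2 * (\<integral>x. g (shrink j 0 x) \<partial>cube_measure s) + 1/2 * (\<integral>x. g (shrink j 1 x) \<partial>cube_measure s)"
proof -
  let ?I = "\<lambda>c. \<integral>x. g (shrink j c x) \<partial>cube_measure s"
  have gc: "(\<lambda>x. g (shrink j c x)) \<in> borel_measurable (cube_measure s)" if "0 \<le> c" "c \<le> 1" for c
    using measurable_comp[OF measurable_shrink[OF j that] g] by (simp add: comp_def)
  have AE_nonneg: "AE x in cube_measure s. 0 \<le> g (shrink j c x)" if "0 \<le> c" "c \<le> 1" for c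
    using nonneg shrink_in_cube[OF j that] by (intro AE_I2) (auto simp: space_cube_measure)
  have nn_eq: "(\<integral>\<^sup>+x. ennreal (g (shrink j c x)) \<partial>cube_measure s) = ennreal (?I c)"
    if "0 \<le> c" "c \<le> 1" for c
    using B shrink_in_cube[OF j that]
    by (intro nn_integral_eq_integral integrable_cube_bounded[OF gc[OF that]] AE_nonneg[OF that]) blast+
  have I_nonneg: "0 \<le> ?I c" if "0 \<le> c" "c \<le> 1" for c
    by (rule integral_nonneg_AE[OF AE_nonneg[OF that]])
  have "ennreal (\<integral>x. g x \<partial>cube_measure s) = (\<integral>\<^sup>+x. ennreal (g x) \<partial>cube_measure s)"
    using nonneg by (intro nn_integral_eq_integral[symmetric] integrable_cube_bounded[OF g B] AE_I2)
      (auto simp: space_cube_measure)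
  also have "\<dots> = ennreal (1/2) * ennreal (?I 0) + ennreal (1/2) * ennreal (?I 1)"
    using nn_integral_shrink[OF j] g nn_eq[of 0] nn_eq[of 1] by simp
  also have "\<dots> = ennreal (1/2 * ?I 0 + 1/2 * ?I 1)"
    using I_nonneg[of 0] I_nonneg[of 1]
    by (subst (1 2) ennreal_mult'[symmetric]) (auto simp: ennreal_plus)
  finally have "ennreal (\<integral>x. g x \<partial>cube_measure s) = ennreal (1/2 * ?I 0 + 1/2 * ?I 1)" .
  moreover have "0 \<le> (\<integral>x. g x \<partial>cube_measure s)"
    using nonneg by (intro integral_nonneg_AE AE_I2) (auto simp: space_cube_measure)
  ultimately show ?thesis
    using I_nonneg[of 0] I_nonneg[of 1] by (subst (asm) ennreal_inj) auto
qed

lemma integral_shrink: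
  fixes g :: "(nat \<Rightarrow> real) \<Rightarrow> real"
  assumes j: "j < s" and g: "g \<in> borel_measurable (cube_measure s)"
    and B: "\<And>x. x \<in> cube s \<Longrightarrow> \<bar>g x\<bar> \<le> B"
  shows "(\<integral>x. g x \<partial>cube_measure s) =
    1/2 * (\<integral>x. g (shrink j 0 x) \<partial>cube_measure s) + 1/2 * (\<integral>x. g (shrink j 1 x) \<partial>cube_measure s)"
proof -
  interpret prob_space "cube_measure s" by (rule prob_space_cube_measure)
  have integrable_shrink: "integrable (cube_measure s) (\<lambda>x. g (shrink j c x))" if "0 \<le> c" "c \<le> 1" for c
    using measurable_comp[OF measurable_shrink[OF j that] g] B shrink_in_cube[OF j that]
    by (intro integrable_cube_bounded) (auto simp: comp_def)
  have shifted: "(\<integral>x. g x + B \<partial>cube_measure s) =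
      1/2 * (\<integral>x. g (shrink j 0 x) + B \<partial>cube_measure s) + 1/2 * (\<integral>x. g (shrink j 1 x) + B \<partial>cube_measure s)"
  proof (rule integral_shrink_nonneg[OF j, where B = "2 * B"])
    show "(\<lambda>x. g x + B) \<in> borel_measurable (cube_measure s)" using g by simp
  qed (use B in \<open>fastforce+\<close>)
  show ?thesis
    using shifted integrable_shrink[of 0] integrable_shrink[of 1] integrable_cube_bounded[OF g B]
    by (simp add: prob_space field_simps)
qed

section \<open>Folding a function along one coordinate\<close>

definition folded :: "nat \<Rightarrow> real \<Rightarrow> ((nat \<Rightarrow> real) \<Rightarrow> real) \<Rightarrow> (nat \<Rightarrow> real) \<Rightarrow> real" where
  "folded j \<sigma> f x = (f (shrink j 0 x) + \<sigma> * f (shrink j 1 x)) / 2"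

lemma smooth_cube_continuous_on:
  "smooth_cube s f \<Longrightarrow> set js \<subseteq> {..<s} \<Longrightarrow> continuous_on (cube s) (iter_partial js f)"
  unfolding smooth_cube_def by blast

lemma smooth_cube_differentiable:
  "smooth_cube s f \<Longrightarrow> set js \<subseteq> {..<s} \<Longrightarrow> i < s \<Longrightarrow> z \<in> cube s \<Longrightarrow>
    (\<lambda>t. iter_partial js f (z(i := t))) differentiable (at (z i) within {0..1})"
  unfolding smooth_cube_def by blast

lemma has_vector_derivative_partial:
  assumes "(\<lambda>t. H (z(i := t))) differentiable (at (z i) within {0..1})"
  shows "((\<lambda>t. H (z(i := t))) has_vector_derivative partial i H z) (at (z i) within {0..1})"
  using assms unfolding partial_def by (simp add: vector_derivative_works)

lemma has_vector_derivative_shrink: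
  assumes j: "j < s" and c: "0 \<le> c" "c \<le> 1" and x: "x \<in> cube s"
    and H: "\<And>z. z \<in> cube s \<Longrightarrow> (\<lambda>t. H (z(i := t))) differentiable (at (z i) within {0..1})"
  shows "((\<lambda>t. H (shrink j c (x(i := t)))) has_vector_derivative
            (if i = j then 1/2 else 1) * partial i H (shrink j c x)) (at (x i) within {0..1})"
proof -
  let ?z = "shrink j c x"
  have z: "?z \<in> cube s" by (rule shrink_in_cube[OF j c x])
  show ?thesis
  proof (cases "i = j")
    case False
    have "shrink j c (x(i := t)) = ?z(i := t)" for t
      using False by (simp add: shrink_def fun_upd_twist)
    moreover have "?z i = x i" using False by (simp add: shrink_def)
    ultimately show ?thesis
      using has_vector_derivative_partial[OF H[OF z]] False by (simp only: if_False mult_1)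
  next
    case True
    have D1: "((\<lambda>u. H (?z(j := u))) has_vector_derivative partial j H ?z) (at (?z j) within {0..1})"
      using has_vector_derivative_partial[OF H[OF z]] by (simp only: True)
    have zj: "?z j = (c + x j) / 2" by (simp add: shrink_def)
    have img: "(\<lambda>t. (c + t) / 2) ` {0..1} \<subseteq> {0..1}" using c by auto
    have D2: "((\<lambda>u. H (?z(j := u))) has_vector_derivative partial j H ?z)
        (at ((\<lambda>t. (c + t) / 2) (x j)) within (\<lambda>t. (c + t) / 2) ` {0..1})"
      using has_vector_derivative_within_subset[OF D1 img] zj by simp
    have "((\<lambda>t. (c + t) / 2) has_vector_derivative 1/2) (at (x j) within {0..1})"
      by (auto intro!: derivative_eq_intros simp: has_real_derivative_iff_has_vector_derivative[symmetric])
    from vector_diff_chain_within[OF this D2]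
    have "(((\<lambda>u. H (?z(j := u))) \<circ> (\<lambda>t. (c + t) / 2)) has_vector_derivative (1/2) *\<^sub>R partial j H ?z)
        (at (x j) within {0..1})" .
    moreover have "(\<lambda>u. H (?z(j := u))) \<circ> (\<lambda>t. (c + t) / 2) = (\<lambda>t. H (shrink j c (x(j := t))))"
      by (auto simp: shrink_def)
    ultimately show ?thesis using True by simp
  qed
qed

lemma has_vector_derivative_folded:
  assumes j: "j < s" and x: "x \<in> cube s"
    and H: "\<And>z. z \<in> cube s \<Longrightarrow> (\<lambda>t. H (z(i := t))) differentiable (at (z i) within {0..1})"
  shows "((\<lambda>t. folded j \<sigma> H (x(i := t))) has_vector_derivative
            (if i = j then 1/2 else 1) * folded j \<sigma> (partial i H) x) (at (x i) within {0..1})"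
proof -
  let ?a = "(if i = j then 1/2 else 1) :: real"
  have D: "((\<lambda>t. H (shrink j c (x(i := t)))) has_real_derivative ?a * partial i H (shrink j c x))
      (at (x i) within {0..1})" if "0 \<le> c" "c \<le> 1" for c
    using has_vector_derivative_shrink[OF j that x H]
    by (simp add: has_real_derivative_iff_has_vector_derivative)
  have "((\<lambda>t. (H (shrink j 0 (x(i := t))) + \<sigma> * H (shrink j 1 (x(i := t)))) / 2) has_real_derivative
      (?a * partial i H (shrink j 0 x) + \<sigma> * (?a * partial i H (shrink j 1 x))) / 2) (at (x i) within {0..1})"
    by (intro DERIV_cdivide DERIV_add DERIV_cmult D) auto
  then show ?thesis
    by (simp add: folded_def has_real_derivative_iff_has_vector_derivative algebra_simps)
qed

lemma has_vector_derivative_iter_partial_folded: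
  assumes f: "smooth_cube s f" and j: "j < s" and js: "set js \<subseteq> {..<s}" and i: "i < s"
    and x: "x \<in> cube s"
    and IH: "\<And>z. z \<in> cube s \<Longrightarrow>
      iter_partial js (folded j \<sigma> f) z = (1/2) ^ count_list js j * folded j \<sigma> (iter_partial js f) z"
  shows "((\<lambda>t. iter_partial js (folded j \<sigma> f) (x(i := t))) has_vector_derivative
      (1/2) ^ count_list (i # js) j * folded j \<sigma> (iter_partial (i # js) f) x) (at (x i) within {0..1})"
proof -
  let ?c = "(1/2::real) ^ count_list js j"
  let ?a = "(if i = j then 1/2 else 1) :: real"
  have "((\<lambda>t. folded j \<sigma> (iter_partial js f) (x(i := t))) has_real_derivative
      ?a * folded j \<sigma> (partial i (iter_partial js f)) x) (at (x i) within {0..1})"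
    using has_vector_derivative_folded[OF j x smooth_cube_differentiable[OF f js i]]
    by (simp add: has_real_derivative_iff_has_vector_derivative)
  from DERIV_cmult[OF this, of ?c]
  have D: "((\<lambda>t. ?c * folded j \<sigma> (iter_partial js f) (x(i := t))) has_vector_derivative
      ?c * (?a * folded j \<sigma> (partial i (iter_partial js f)) x)) (at (x i) within {0..1})"
    by (simp add: has_real_derivative_iff_has_vector_derivative)
  have eq: "?c * (?a * folded j \<sigma> (partial i (iter_partial js f)) x) =
      (1/2) ^ count_list (i # js) j * folded j \<sigma> (iter_partial (i # js) f) x"
    by simp
  have "((\<lambda>t. iter_partial js (folded j \<sigma> f) (x(i := t))) has_vector_derivative
      ?c * (?a * folded j \<sigma> (partial i (iter_partial js f)) x)) (at (x i) within {0..1})"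
  proof (rule has_vector_derivative_transform_within[OF D zero_less_one cube_component[OF x i]])
    fix t :: real assume "t \<in> {0..1}"
    then have "x(i := t) \<in> cube s"
      using x i by (intro fun_upd_in_cube[where I="{..<s}"]) (auto simp: cube_def)
    then show "?c * folded j \<sigma> (iter_partial js f) (x(i := t)) = iter_partial js (folded j \<sigma> f) (x(i := t))"
      using IH by simp
  qed
  then show ?thesis unfolding eq .
qed

lemma iter_partial_folded:
  assumes f: "smooth_cube s f" and j: "j < s"
  shows "set js \<subseteq> {..<s} \<Longrightarrow> x \<in> cube s \<Longrightarrow>
    iter_partial js (folded j \<sigma> f) x = (1/2) ^ count_list js j * folded j \<sigma> (iter_partial js f) x"
proof (induction js arbitrary: x)
  case (Cons i js)
  then have js: "set js \<subseteq> {..<s}" and i: "i < s" by auto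
  have "iter_partial (i # js) (folded j \<sigma> f) x =
      vector_derivative (\<lambda>t. iter_partial js (folded j \<sigma> f) (x(i := t))) (at (x i) within {0..1})"
    by (simp add: partial_def)
  also have "\<dots> = (1/2) ^ count_list (i # js) j * folded j \<sigma> (iter_partial (i # js) f) x"
    using has_vector_derivative_iter_partial_folded[OF f j js i Cons.prems(2) Cons.IH[OF js]]
      cube_component[OF Cons.prems(2) i]
    by (intro vector_derivative_within_closed_interval[OF zero_less_one]) auto
  finally show ?case .
qed simp

lemma continuous_on_shrink: "continuous_on S (shrink j c)"
proof (rule continuous_on_coordinatewise_then_product)
  fix i
  have coord: "continuous_on S (\<lambda>x. x i)" for i
    by (rule continuous_on_subset[OF continuous_on_product_coordinates]) auto
  show "continuous_on S (\<lambda>x. shrink j c x i)"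
  proof (cases "i = j")
    case True
    have "continuous_on S (\<lambda>x. (c + x j) / 2)" by (intro continuous_intros coord) auto
    then show ?thesis using True by (simp add: shrink_def)
  qed (simp add: shrink_def coord)
qed

lemma continuous_on_comp_shrink:
  assumes "continuous_on (cube s) H" "j < s" "0 \<le> c" "c \<le> 1"
  shows "continuous_on (cube s) (\<lambda>x. H (shrink j c x))"
  by (rule continuous_on_compose2[OF assms(1) continuous_on_shrink]) (use shrink_in_cube[OF assms(2-4)] in auto)

lemma continuous_on_folded:
  assumes "j < s" "continuous_on (cube s) H"
  shows "continuous_on (cube s) (folded j \<sigma> H)"
proof -
  have "continuous_on (cube s) (\<lambda>x. H (shrink j c x))" if "0 \<le> c" "c \<le> 1" for c
    by (rule continuous_on_comp_shrink[OF assms(2,1) that])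
  then show ?thesis unfolding folded_def[abs_def] by (intro continuous_intros) auto
qed

lemma smooth_cube_folded:
  assumes f: "smooth_cube s f" and j: "j < s"
  shows "smooth_cube s (folded j \<sigma> f)"
  unfolding smooth_cube_def
proof (intro allI impI conjI ballI)
  fix js assume js: "set js \<subseteq> {..<s}"
  have eq: "\<And>z. z \<in> cube s \<Longrightarrow>
      iter_partial js (folded j \<sigma> f) z = (1/2) ^ count_list js j * folded j \<sigma> (iter_partial js f) z"
    using iter_partial_folded[OF f j js] by blast
  have "continuous_on (cube s) (\<lambda>z. (1/2) ^ count_list js j * folded j \<sigma> (iter_partial js f) z)"
    by (intro continuous_intros continuous_on_folded[OF j] smooth_cube_continuous_on[OF f js])
  moreover have "continuous_on (cube s) (iter_partial js (folded j \<sigma> f)) =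
      continuous_on (cube s) (\<lambda>z. (1/2) ^ count_list js j * folded j \<sigma> (iter_partial js f) z)"
    by (rule continuous_on_cong[OF refl eq])
  ultimately show "continuous_on (cube s) (iter_partial js (folded j \<sigma> f))" by simp
  fix i x assume "i < s" "x \<in> cube s"
  from has_vector_derivative_iter_partial_folded[OF f j js this eq]
  show "(\<lambda>t. iter_partial js (folded j \<sigma> f) (x(i := t))) differentiable (at (x i) within {0..1})"
    by (rule differentiableI_vector)
qed

lemma AE_cube_measure_component_neq_1:
  assumes "j < s"
  shows "AE x in cube_measure s. x j \<noteq> 1"
proof -
  have "AE y in unit_interval_measure. y \<noteq> 1"
    using AE_lborel_singleton[of "1::real"] by (subst AE_restrict_space_iff) (auto elim: AE_mp)
  then show ?thesis unfolding cube_measure_def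
    by (intro AE_PiM_component[where P="\<lambda>y. y \<noteq> 1"] prob_space_unit_interval_measure) (use assms in auto)
qed

lemma fhat_folded:
  assumes f: "smooth_cube s f" and j: "j < s"
  shows "fhat s f k = fhat s (folded j ((-1) ^ (k j mod 2)) f) (k(j := k j div 2))"
proof -
  let ?k' = "k(j := k j div 2)"
  let ?\<sigma> = "(-1::real) ^ (k j mod 2)"
  define g where "g x = f x * walsh s k x" for x
  have fc: "continuous_on (cube s) f" using smooth_cube_continuous_on[OF f, of "[]"] by simp
  obtain B where B: "\<And>x. x \<in> cube s \<Longrightarrow> \<bar>f x\<bar> \<le> B" using continuous_on_cube_bounded[OF fc] by blast
  have g: "g \<in> borel_measurable (cube_measure s)"
    unfolding g_def[abs_def] using borel_measurable_continuous_on_cube[OF fc] borel_measurable_walsh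
    by measurable
  have gB: "\<bar>g x\<bar> \<le> B" if "x \<in> cube s" for x
    using B[OF that] by (simp add: g_def abs_mult)
  have gc: "(\<lambda>x. g (shrink j c x)) \<in> borel_measurable (cube_measure s)" if "0 \<le> c" "c \<le> 1" for c
    using measurable_comp[OF measurable_shrink[OF j that] g] by (simp add: comp_def)
  have "integrable (cube_measure s) (\<lambda>x. g (shrink j c x))" if "0 \<le> c" "c \<le> 1" for c
    by (rule integrable_cube_bounded[OF gc[OF that]]) (use gB shrink_in_cube[OF j that] in blast)
  then have "fhat s f k = (\<integral>x. 1/2 * g (shrink j 0 x) + 1/2 * g (shrink j 1 x) \<partial>cube_measure s)"
    using integral_shrink[OF j g gB] by (simp add: fhat_def g_def)
  also have "\<dots> = (\<integral>x. folded j ?\<sigma> f x * walsh s ?k' x \<partial>cube_measure s)"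
  proof (rule integral_cong_AE)
    show "(\<lambda>x. 1/2 * g (shrink j 0 x) + 1/2 * g (shrink j 1 x)) \<in> borel_measurable (cube_measure s)"
      using gc[of 0] gc[of 1] by measurable
    show "(\<lambda>x. folded j ?\<sigma> f x * walsh s ?k' x) \<in> borel_measurable (cube_measure s)"
      using borel_measurable_continuous_on_cube[OF continuous_on_folded[OF j fc]] borel_measurable_walsh
      by measurable
    \<comment> \<open>the digit identities for \<open>walsh\<close> fail on the null set \<open>x j = 1\<close>\<close>
    show "AE x in cube_measure s. 1/2 * g (shrink j 0 x) + 1/2 * g (shrink j 1 x) = folded j ?\<sigma> f x * walsh s ?k' x"
      using AE_cube_measure_component_neq_1[OF j] AE_space
    proof eventually_elim
      case (elim x)
      then have "0 \<le> x j" "x j < 1"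
        using cube_component[OF _ j, of x] by (auto simp: space_cube_measure)
      then show ?case
        using walsh_shrink_0[OF j, of x k] walsh_shrink_1[OF j, of x k]
        by (simp add: g_def folded_def algebra_simps)
    qed
  qed
  also have "\<dots> = fhat s (folded j ?\<sigma> f) ?k'" by (simp add: fhat_def)
  finally show ?thesis .
qed

lemma integral_unit_interval_measure:
  fixes g :: "real \<Rightarrow> real"
  assumes g: "continuous_on {0..1} g"
  shows "integrable unit_interval_measure g" "integral\<^sup>L unit_interval_measure g = integral {0..1} g"
proof -
  have int: "integrable lborel (\<lambda>x. indicator {0..1} x *\<^sub>R g x)"
    by (rule borel_integrable_compact[OF compact_Icc g])
  then show "integrable unit_interval_measure g"
    by (subst integrable_restrict_space) auto
  have "integral\<^sup>L unit_interval_measure g = integral\<^sup>L lborel (\<lambda>x. indicator {0..1} x *\<^sub>R g x)"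
    by (rule integral_restrict_space) auto
  also have "\<dots> = set_lebesgue_integral lborel {0..1} g"
    by (simp add: set_lebesgue_integral_def)
  also have "\<dots> = integral {0..1} g"
    by (rule set_borel_integral_eq_integral(2)) (use int in \<open>simp add: set_integrable_def\<close>)
  finally show "integral\<^sup>L unit_interval_measure g = integral {0..1} g" .
qed

lemma abs_diff_le_integral_abs_derivative:
  fixes \<gamma> \<gamma>' :: "real \<Rightarrow> real"
  assumes c': "continuous_on {0..1} \<gamma>'"
    and d: "\<And>t. t \<in> {0..1} \<Longrightarrow> (\<gamma> has_vector_derivative \<gamma>' t) (at t within {0..1})"
    and ab: "0 \<le> a" "a \<le> b" "b \<le> 1"
  shows "\<bar>\<gamma> b - \<gamma> a\<bar> \<le> integral {0..1} (\<lambda>t. \<bar>\<gamma>' t\<bar>)"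
proof -
  have sub: "{a..b} \<subseteq> {0..1}" using ab by auto
  have "(\<gamma>' has_integral \<gamma> b - \<gamma> a) {a..b}"
    by (rule fundamental_theorem_of_calculus[OF ab(2)])
       (use d sub in \<open>blast intro: has_vector_derivative_within_subset\<close>)
  then have "\<bar>\<gamma> b - \<gamma> a\<bar> = norm (integral {a..b} \<gamma>')" by (simp add: integral_unique)
  also have "\<dots> \<le> integral {a..b} (\<lambda>t. \<bar>\<gamma>' t\<bar>)"
    using continuous_on_subset[OF c' sub]
    by (intro integral_norm_bound_integral integrable_continuous_interval continuous_intros) auto
  also have "\<dots> \<le> integral {0..1} (\<lambda>t. \<bar>\<gamma>' t\<bar>)"
    using continuous_on_subset[OF c' sub] c'
    by (intro integral_subset_le[OF sub] integrable_continuous_interval continuous_intros) auto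
  finally show ?thesis .
qed

lemma continuous_on_fun_upd: "continuous_on S (\<lambda>t::real. x(j := t))"
proof (rule continuous_on_coordinatewise_then_product)
  fix k show "continuous_on S (\<lambda>t. (x(j := t)) k)"
    by (cases "k = j") (simp_all add: continuous_on_id continuous_on_const)
qed

lemma nn_integral_abs_diff_shrink_le:
  assumes f: "smooth_cube s f" and j: "j < s" and L: "set L \<subseteq> {..<s}"
    and x: "\<And>t. t \<in> {0..1} \<Longrightarrow> x(j := t) \<in> cube s"
  shows "(\<integral>\<^sup>+y. ennreal \<bar>iter_partial L f (shrink j 0 (x(j := y))) - iter_partial L f (shrink j 1 (x(j := y)))\<bar>
            \<partial>unit_interval_measure)
         \<le> (\<integral>\<^sup>+y. ennreal \<bar>iter_partial (j # L) f (x(j := y))\<bar> \<partial>unit_interval_measure)"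
proof -
  let ?G = "iter_partial L f"
  let ?G' = "\<lambda>t. iter_partial (j # L) f (x(j := t))"
  define K where "K = integral {0..1} (\<lambda>t. \<bar>?G' t\<bar>)"
  have G'c: "continuous_on {0..1} ?G'"
    by (rule continuous_on_compose2[OF smooth_cube_continuous_on[OF f] continuous_on_fun_upd])
       (use L j x in auto)
  have deriv: "((\<lambda>t. ?G (x(j := t))) has_vector_derivative ?G' t) (at t within {0..1})"
    if "t \<in> {0..1}" for t
  proof -
    have "((\<lambda>u. ?G ((x(j := t))(j := u))) has_vector_derivative partial j ?G (x(j := t)))
        (at ((x(j := t)) j) within {0..1})"
      by (rule has_vector_derivative_partial[OF smooth_cube_differentiable[OF f L j x[OF that]]])
    then show ?thesis by simp
  qed
  have "\<bar>?G (x(j := (1 + y) / 2)) - ?G (x(j := y / 2))\<bar> \<le> K" if "y \<in> {0..1}" for y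
    unfolding K_def by (rule abs_diff_le_integral_abs_derivative[OF G'c deriv]) (use that in auto)
  then have "(\<integral>\<^sup>+y. ennreal \<bar>?G (shrink j 0 (x(j := y))) - ?G (shrink j 1 (x(j := y)))\<bar> \<partial>unit_interval_measure)
      \<le> (\<integral>\<^sup>+y. ennreal K \<partial>unit_interval_measure)"
    by (intro nn_integral_mono ennreal_leI)
      (auto simp: shrink_def space_restrict_space abs_minus_commute)
  also have "\<dots> = ennreal (integral\<^sup>L unit_interval_measure (\<lambda>t. \<bar>?G' t\<bar>))"
    using prob_space.emeasure_space_1[OF prob_space_unit_interval_measure]
      integral_unit_interval_measure(2)[of "\<lambda>t. \<bar>?G' t\<bar>"] G'c
    by (simp add: K_def continuous_on_rabs)
  also have "\<dots> = (\<integral>\<^sup>+y. ennreal \<bar>?G' y\<bar> \<partial>unit_interval_measure)"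
    using integral_unit_interval_measure(1)[of "\<lambda>t. \<bar>?G' t\<bar>"] G'c
    by (intro nn_integral_eq_integral[symmetric]) (auto simp: continuous_on_rabs)
  finally show ?thesis .
qed

lemma integral_abs_folded_minus_le:
  assumes f: "smooth_cube s f" and j: "j < s" and L: "set L \<subseteq> {..<s}"
  shows "(\<integral>x. \<bar>folded j (-1) (iter_partial L f) x\<bar> \<partial>cube_measure s)
         \<le> 1/2 * (\<integral>x. \<bar>iter_partial (j # L) f x\<bar> \<partial>cube_measure s)"
proof -
  let ?G = "iter_partial L f"
  let ?I = "{..<s} - {j}"
  let ?P = "PiM ?I (\<lambda>_. unit_interval_measure)"
  define A where "A x = \<bar>?G (shrink j 0 x) - ?G (shrink j 1 x)\<bar>" for x
  define B where "B x = \<bar>iter_partial (j # L) f x\<bar>" for x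
  note C = cube_measure_insert[OF j]
  have Ac: "continuous_on (cube s) A"
    using continuous_on_comp_shrink[OF smooth_cube_continuous_on[OF f L] j]
    unfolding A_def[abs_def] by (intro continuous_intros) auto
  have Bc: "continuous_on (cube s) B"
    unfolding B_def[abs_def] using L j by (intro continuous_intros smooth_cube_continuous_on[OF f]) auto
  have A_nonneg: "AE x in cube_measure s. 0 \<le> A x" and B_nonneg: "AE x in cube_measure s. 0 \<le> B x"
    by (simp_all add: A_def B_def)
  have "ennreal (\<integral>x. A x \<partial>cube_measure s) = (\<integral>\<^sup>+x. ennreal (A x) \<partial>cube_measure s)"
    by (rule nn_integral_eq_integral[OF integrable_continuous_on_cube[OF Ac] A_nonneg, symmetric])
  also have "\<dots> = (\<integral>\<^sup>+x. (\<integral>\<^sup>+y. ennreal (A (x(j := y))) \<partial>unit_interval_measure) \<partial>?P)"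
    unfolding C using borel_measurable_continuous_on_cube[OF Ac] C
    by (intro unit_cube.product_nn_integral_insert) auto
  also have "\<dots> \<le> (\<integral>\<^sup>+x. (\<integral>\<^sup>+y. ennreal (B (x(j := y))) \<partial>unit_interval_measure) \<partial>?P)"
  proof (rule nn_integral_mono)
    fix x assume "x \<in> space ?P"
    then have "x(j := t) \<in> cube s" if "t \<in> {0..1}" for t
      using that j by (intro fun_upd_in_cube[of x ?I]) (auto simp: space_PiM space_restrict_space)
    from nn_integral_abs_diff_shrink_le[OF f j L this]
    show "(\<integral>\<^sup>+y. ennreal (A (x(j := y))) \<partial>unit_interval_measure) \<le>
        (\<integral>\<^sup>+y. ennreal (B (x(j := y))) \<partial>unit_interval_measure)"
      by (simp add: A_def B_def)
  qed
  also have "\<dots> = (\<integral>\<^sup>+x. ennreal (B x) \<partial>cube_measure s)"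
    unfolding C using borel_measurable_continuous_on_cube[OF Bc] C
    by (intro unit_cube.product_nn_integral_insert[symmetric]) auto
  also have "\<dots> = ennreal (\<integral>x. B x \<partial>cube_measure s)"
    by (rule nn_integral_eq_integral[OF integrable_continuous_on_cube[OF Bc] B_nonneg])
  finally have "(\<integral>x. A x \<partial>cube_measure s) \<le> (\<integral>x. B x \<partial>cube_measure s)"
    using integral_nonneg_AE[OF B_nonneg] by (simp add: ennreal_le_iff)
  moreover have "(\<integral>x. \<bar>folded j (-1) ?G x\<bar> \<partial>cube_measure s) = 1/2 * (\<integral>x. A x \<partial>cube_measure s)"
    by (simp add: folded_def A_def)
  ultimately show ?thesis by (simp add: B_def)
qed

lemma integral_abs_folded_1_le:
  assumes j: "j < s" and g: "continuous_on (cube s) g"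
  shows "(\<integral>x. \<bar>folded j 1 g x\<bar> \<partial>cube_measure s) \<le> (\<integral>x. \<bar>g x\<bar> \<partial>cube_measure s)"
proof -
  have g_shrink: "continuous_on (cube s) (\<lambda>x. \<bar>g (shrink j c x)\<bar>)" if "0 \<le> c" "c \<le> 1" for c
    by (intro continuous_intros continuous_on_comp_shrink[OF g j that])
  have abs_g: "continuous_on (cube s) (\<lambda>x. \<bar>g x\<bar>)" by (intro continuous_intros g)
  obtain B where B: "\<And>x. x \<in> cube s \<Longrightarrow> \<bar>\<bar>g x\<bar>\<bar> \<le> B"
    using continuous_on_cube_bounded[OF abs_g] by blast
  have "(\<integral>x. \<bar>folded j 1 g x\<bar> \<partial>cube_measure s)
      \<le> (\<integral>x. 1/2 * \<bar>g (shrink j 0 x)\<bar> + 1/2 * \<bar>g (shrink j 1 x)\<bar> \<partial>cube_measure s)"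
  proof (rule integral_mono)
    show "integrable (cube_measure s) (\<lambda>x. \<bar>folded j 1 g x\<bar>)"
      by (intro integrable_continuous_on_cube continuous_intros continuous_on_folded[OF j g])
    show "integrable (cube_measure s) (\<lambda>x. 1/2 * \<bar>g (shrink j 0 x)\<bar> + 1/2 * \<bar>g (shrink j 1 x)\<bar>)"
      by (intro integrable_continuous_on_cube continuous_intros g_shrink) auto
  qed (simp add: folded_def abs_triangle_ineq[THEN order_trans])
  also have "\<dots> = (\<integral>x. \<bar>g x\<bar> \<partial>cube_measure s)"
    using integrable_continuous_on_cube[OF g_shrink[of 0]] integrable_continuous_on_cube[OF g_shrink[of 1]]
      integral_shrink[OF j borel_measurable_continuous_on_cube[OF abs_g] B]
    by simp
  finally show ?thesis .
qed

definition deriv_list :: "nat \<Rightarrow> (nat \<Rightarrow> nat) \<Rightarrow> nat list" where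
  "deriv_list s k = concat (map (\<lambda>i. replicate (card (kappa (k i))) i) [0..<s])"

lemma mixed_deriv_eq_iter_partial: "mixed_deriv s k f = iter_partial (deriv_list s k) f"
  by (simp add: mixed_deriv_def deriv_list_def)

lemma set_deriv_list: "set (deriv_list s k) \<subseteq> {..<s}"
  by (auto simp: deriv_list_def)

lemma count_list_replicate: "count_list (replicate n i) j = (if i = j then n else 0)"
  by (induction n) auto

lemma count_list_deriv_list: "count_list (deriv_list s k) j = (if j < s then card (kappa (k j)) else 0)"
  by (induction s) (auto simp: deriv_list_def count_list_replicate)

lemma deriv_list_zero: "\<forall>i<s. k i = 0 \<Longrightarrow> deriv_list s k = []"
  by (simp add: deriv_list_def)

lemma deriv_list_halve_even:
  assumes "even (k j)"
  shows "deriv_list s (k(j := k j div 2)) = deriv_list s k"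
proof -
  have "card (kappa ((k(j := k j div 2)) i)) = card (kappa (k i))" for i
    using card_kappa_halve[of "k j"] assms by (cases "i = j") (auto simp: even_iff_mod_2_eq_zero)
  then show ?thesis unfolding deriv_list_def by simp
qed

lemma deriv_list_halve_odd:
  assumes "odd (k j)" "j < s" "\<forall>i<j. k i = 0"
  shows "deriv_list s k = j # deriv_list s (k(j := k j div 2))"
proof -
  let ?k' = "k(j := k j div 2)"
  let ?rep = "\<lambda>k i. replicate (card (kappa (k i))) i"
  have split: "[0..<s] = [0..<j] @ j # [Suc j..<s]"
    using assms(2) upt_add_eq_append[of 0 j "s - j"] upt_conv_Cons[of j s] by simp
  have decompose: "deriv_list s k' =
      concat (map (?rep k') [0..<j]) @ replicate (card (kappa (k' j))) j @ concat (map (?rep k') [Suc j..<s])"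
    for k'
    unfolding deriv_list_def split by simp
  have prefix: "concat (map (?rep k') [0..<j]) = []" if "\<forall>i<j. k' i = 0" for k'
    using that by (induction j) auto
  have "\<forall>i<j. ?k' i = 0" using assms(3) by auto
  moreover have "map (?rep ?k') [Suc j..<s] = map (?rep k) [Suc j..<s]"
    by (rule map_cong) auto
  moreover have "card (kappa (k j)) = Suc (card (kappa (k j div 2)))"
    using card_kappa_halve[of "k j"] assms(1) by (simp add: odd_iff_mod_2_eq_one)
  ultimately show ?thesis
    unfolding decompose[of k] decompose[of ?k'] by (simp only: prefix[OF assms(3)] prefix) simp
qed

lemma L1norm_mixed_deriv_folded_le:
  assumes f: "smooth_cube s f" and j: "j < s" and lead: "\<forall>i<j. k i = 0"
  shows "L1norm s (mixed_deriv s (k(j := k j div 2)) (folded j ((-1) ^ (k j mod 2)) f))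
          \<le> (1/2) ^ card (kappa (k j)) * L1norm s (mixed_deriv s k f)"
proof -
  let ?k' = "k(j := k j div 2)"
  let ?\<sigma> = "(-1::real) ^ (k j mod 2)"
  let ?L' = "deriv_list s ?k'"
  let ?c' = "card (kappa (k j div 2))"
  have "mixed_deriv s ?k' (folded j ?\<sigma> f) x = (1/2) ^ ?c' * folded j ?\<sigma> (iter_partial ?L' f) x"
    if "x \<in> cube s" for x
    using iter_partial_folded[OF f j set_deriv_list that] j
    by (simp add: mixed_deriv_eq_iter_partial count_list_deriv_list)
  then have L1_eq: "L1norm s (mixed_deriv s ?k' (folded j ?\<sigma> f)) =
      (1/2) ^ ?c' * (\<integral>x. \<bar>folded j ?\<sigma> (iter_partial ?L' f) x\<bar> \<partial>cube_measure s)"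
    unfolding L1norm_def
    by (subst Bochner_Integration.integral_cong[OF refl]) (auto simp: space_cube_measure abs_mult)
  show ?thesis
  proof (cases "even (k j)")
    case True
    then have "?\<sigma> = 1" "?L' = deriv_list s k" "?c' = card (kappa (k j))"
      using card_kappa_halve[of "k j"] deriv_list_halve_even[where k=k and j=j and s=s, OF True]
      by (auto simp: even_iff_mod_2_eq_zero)
    then show ?thesis
      using L1_eq integral_abs_folded_1_le[OF j smooth_cube_continuous_on[OF f set_deriv_list]]
      by (simp add: L1norm_def mixed_deriv_eq_iter_partial mult_left_mono)
  next
    case False
    then have "?\<sigma> = -1" "deriv_list s k = j # ?L'" "card (kappa (k j)) = Suc ?c'"
      using card_kappa_halve[of "k j"] deriv_list_halve_odd[where k=k and j=j and s=s, OF False j lead]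
      by (auto simp: odd_iff_mod_2_eq_one)
    then show ?thesis
      using L1_eq mult_left_mono[OF integral_abs_folded_minus_le[OF f j set_deriv_list], of "(1/2) ^ ?c'"]
      by (simp add: L1norm_def mixed_deriv_eq_iter_partial)
  qed
qed

lemma first_nonzero_index:
  assumes "k \<in> idx s" "\<not> (\<forall>i<s. k i = 0)"
  obtains j where "j < s" "k j \<noteq> 0" "\<forall>i<j. k i = 0"
proof -
  obtain j where j: "k j \<noteq> 0" "\<forall>i<j. k i = 0"
    using assms(2) exists_least_iff[of "\<lambda>i. k i \<noteq> 0"] by blast
  moreover have "j < s"
  proof (rule ccontr)
    assume "\<not> j < s"
    then have "k j = 0" using assms(1) by (simp add: idx_def)
    with j(1) show False by simp
  qed
  ultimately show ?thesis using that by blast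
qed

theorem abs_fhat_le:
  assumes "smooth_cube s f" "k \<in> idx s"
  shows "\<bar>fhat s f k\<bar> \<le> (1/2) ^ norm1 s k * L1norm s (mixed_deriv s k f)"
  using assms
proof (induction k arbitrary: f rule: measure_induct_rule[where f="\<lambda>k. \<Sum>i<s. k i"])
  case (less k)
  note f = less.prems(1) and k = less.prems(2)
  show ?case
  proof (cases "\<forall>i<s. k i = 0")
    case True
    then show ?thesis
      by (simp add: fhat_def walsh_def norm1_def L1norm_def mixed_deriv_eq_iter_partial deriv_list_zero)
  next
    case False
    then obtain j where j: "j < s" "k j \<noteq> 0" and lead: "\<forall>i<j. k i = 0"
      using first_nonzero_index[OF k] by blast
    let ?k' = "k(j := k j div 2)"
    let ?\<sigma> = "(-1::real) ^ (k j mod 2)"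
    have "(\<Sum>i<s. ?k' i) < (\<Sum>i<s. k i)"
      using j by (intro sum_strict_mono_ex1) auto
    moreover have "?k' \<in> idx s" using k j by (auto simp: idx_def)
    ultimately have IH: "\<bar>fhat s (folded j ?\<sigma> f) ?k'\<bar> \<le>
        (1/2) ^ norm1 s ?k' * L1norm s (mixed_deriv s ?k' (folded j ?\<sigma> f))"
      using less.IH smooth_cube_folded[OF f j(1)] by blast
    have "\<bar>fhat s f k\<bar> = \<bar>fhat s (folded j ?\<sigma> f) ?k'\<bar>" using fhat_folded[OF f j(1)] by simp
    also have "\<dots> \<le> (1/2) ^ norm1 s ?k' * ((1/2) ^ card (kappa (k j)) * L1norm s (mixed_deriv s k f))"
      by (rule order_trans[OF IH mult_left_mono[OF L1norm_mixed_deriv_folded_le[OF f j(1) lead]]]) simp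
    also have "\<dots> = (1/2) ^ norm1 s k * L1norm s (mixed_deriv s k f)"
      using norm1_halve[OF j(1), of k] by (simp add: power_add)
    finally show ?thesis .
  qed
qed

section \<open>Summing the weights of all multi-indices\<close>

definition digit_weight :: "real \<Rightarrow> real \<Rightarrow> nat \<Rightarrow> real" where
  "digit_weight a y n = a ^ card (kappa n) * y ^ (\<Sum>l\<in>kappa n. l)"

lemma sum_lessThan_double: "(\<Sum>n<2 * (m::nat). (h n :: real)) = (\<Sum>q<m. h (2 * q) + h (2 * q + 1))"
  by (induction m) (simp_all add: algebra_simps)

lemma digit_weight_double: "digit_weight a y (2 * q) = digit_weight (a * y) y q"
  using card_kappa_halve[of "2 * q"] sum_kappa_halve_id[of "2 * q"]
  by (simp add: digit_weight_def power_add power_mult_distrib)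

lemma digit_weight_double_Suc: "digit_weight a y (2 * q + 1) = a * y * digit_weight (a * y) y q"
  using card_kappa_halve[of "2 * q + 1"] sum_kappa_halve_id[of "2 * q + 1"]
  by (simp add: digit_weight_def power_add power_mult_distrib)

lemma sum_digit_weight_power_of_two: "(\<Sum>n<2 ^ L. digit_weight a y n) = (\<Prod>l<L. 1 + a * y ^ Suc l)"
proof (induction L arbitrary: a)
  case 0
  then show ?case by (simp add: digit_weight_def)
next
  case (Suc L)
  have "(\<Sum>n<2 ^ Suc L. digit_weight a y n) =
      (\<Sum>q<2 ^ L. digit_weight a y (2 * q) + digit_weight a y (2 * q + 1))"
    by (simp add: sum_lessThan_double)
  also have "\<dots> = (\<Sum>q<2 ^ L. (1 + a * y) * digit_weight (a * y) y q)"
    unfolding digit_weight_double digit_weight_double_Suc by (simp add: algebra_simps)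
  also have "\<dots> = (1 + a * y) * (\<Prod>l<L. 1 + a * y * y ^ Suc l)"
    by (simp add: sum_distrib_left[symmetric] Suc.IH)
  also have "\<dots> = (\<Prod>l<Suc L. 1 + a * y ^ Suc l)"
    by (subst prod.lessThan_Suc_shift) (simp add: algebra_simps)
  finally show ?case .
qed

lemma prod_one_plus_geometric_le_exp:
  fixes a y :: real
  assumes a: "0 \<le> a" and y: "0 \<le> y" "y < 1"
  shows "(\<Prod>l<L. 1 + a * y ^ Suc l) \<le> exp (a * y / (1 - y))"
proof -
  have "(\<Prod>l<L. 1 + a * y ^ Suc l) \<le> (\<Prod>l<L. exp (a * y ^ Suc l))"
  proof (rule prod_mono)
    fix l :: nat
    have "0 \<le> a * y ^ Suc l" using a y by simp
    then show "0 \<le> 1 + a * y ^ Suc l \<and> 1 + a * y ^ Suc l \<le> exp (a * y ^ Suc l)"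
      using exp_ge_add_one_self[of "a * y ^ Suc l"] by simp
  qed
  also have "\<dots> = exp (a * y * (\<Sum>l<L. y ^ l))"
    by (simp add: exp_sum sum_distrib_left algebra_simps)
  also have "(\<Sum>l<L. y ^ l) = (1 - y ^ L) / (1 - y)" using y by (simp add: sum_gp_strict)
  also have "a * y * ((1 - y ^ L) / (1 - y)) \<le> a * y / (1 - y)"
    using a y by (simp add: mult_left_le divide_right_mono)
  finally show ?thesis by simp
qed

lemma inj_on_restrict_idx: "inj_on (\<lambda>k. restrict k {..<s}) (idx s)"
proof (rule inj_onI)
  fix k k' assume "k \<in> idx s" "k' \<in> idx s" "restrict k {..<s} = restrict k' {..<s}"
  then have "k i = k' i" for i
    by (cases "i < s") (auto simp: idx_def dest: fun_cong[of _ _ i])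
  then show "k = k'" by blast
qed

lemma sum_weight_le_exp:
  fixes a y :: real
  assumes a: "0 \<le> a" and y: "0 \<le> y" "y < 1" and F: "finite F" "F \<subseteq> idx s"
  shows "(\<Sum>k\<in>F. a ^ norm0 s k * y ^ norm1 s k) \<le> exp (a * y / (1 - y)) ^ s"
proof -
  let ?r = "\<lambda>k. restrict k {..<s}"
  define L where "L = (\<Sum>k\<in>F. \<Sum>i<s. k i)"
  have "k i < 2 ^ L" if "k \<in> F" "i < s" for k i
  proof -
    have "k i \<le> L"
      unfolding L_def using that F
      by (intro order_trans[OF member_le_sum member_le_sum[of k F "\<lambda>k. \<Sum>i<s. k i"]]) auto
    then show ?thesis using less_exp[of L] by linarith
  qed
  then have "?r k \<in> PiE {..<s} (\<lambda>_. {..<2 ^ L})" if "k \<in> F" for k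
    using that by (simp only: restrict_PiE_iff) simp
  then have image: "?r ` F \<subseteq> PiE {..<s} (\<lambda>_. {..<2 ^ L})" by blast
  have "(\<Sum>k\<in>F. a ^ norm0 s k * y ^ norm1 s k) = (\<Sum>k\<in>F. \<Prod>i<s. digit_weight a y (?r k i))"
    by (simp add: norm0_def norm1_def digit_weight_def power_sum prod.distrib)
  also have "\<dots> = (\<Sum>g\<in>?r ` F. \<Prod>i<s. digit_weight a y (g i))"
    using inj_on_subset[OF inj_on_restrict_idx F(2)] by (simp add: sum.reindex)
  also have "\<dots> \<le> (\<Sum>g\<in>PiE {..<s} (\<lambda>_. {..<2 ^ L}). \<Prod>i<s. digit_weight a y (g i))"
    using a y by (intro sum_mono2[OF _ image]) (auto intro!: finite_PiE prod_nonneg simp: digit_weight_def)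
  also have "\<dots> = (\<Prod>i<s. \<Sum>n<2 ^ L. digit_weight a y n)"
    by (rule prod_sum_PiE[symmetric]) auto
  also have "\<dots> = (\<Prod>l<L. 1 + a * y ^ Suc l) ^ s"
    by (simp add: sum_digit_weight_power_of_two)
  also have "\<dots> \<le> exp (a * y / (1 - y)) ^ s"
    using a y by (intro power_mono prod_one_plus_geometric_le_exp prod_nonneg) auto
  finally show ?thesis .
qed

lemma weight_summable_on_idx:
  fixes a y :: real
  assumes "0 \<le> a" "0 \<le> y" "y < 1"
  shows "(\<lambda>k. a ^ norm0 s k * y ^ norm1 s k) summable_on idx s"
    and "(\<Sum>\<^sub>\<infinity>k\<in>idx s. a ^ norm0 s k * y ^ norm1 s k) \<le> exp (a * y / (1 - y)) ^ s"
proof -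
  have finite_sums: "sum (\<lambda>k. a ^ norm0 s k * y ^ norm1 s k) F \<le> exp (a * y / (1 - y)) ^ s"
    if "finite F" "F \<subseteq> idx s" for F
    using sum_weight_le_exp assms that by blast
  show summable: "(\<lambda>k. a ^ norm0 s k * y ^ norm1 s k) summable_on idx s"
    using assms finite_sums
    by (intro nonneg_bdd_above_summable_on bdd_aboveI[where M="exp (a * y / (1 - y)) ^ s"]) auto
  show "(\<Sum>\<^sub>\<infinity>k\<in>idx s. a ^ norm0 s k * y ^ norm1 s k) \<le> exp (a * y / (1 - y)) ^ s"
    by (rule infsum_le_finite_sums[OF summable finite_sums])
qed

section \<open>The tail of the Walsh series\<close>

lemma rankin_base_bounds:
  assumes N: "1 \<le> N"
  defines "y \<equiv> 2 powr (-1 / sqrt (real N))"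
  shows "0 < y" "y < 1" "y / (1 - y) \<le> sqrt (real N) / ln 2"
proof -
  define u where "u = ln 2 / sqrt (real N)"
  have u: "0 < u" using N by (simp add: u_def)
  have y: "y = exp (- u)" unfolding y_def u_def powr_def by simp
  show "0 < y" by (simp add: y)
  show "y < 1" using u by (simp add: y)
  have "y * (1 + u) \<le> y * exp u" by (simp add: y exp_ge_add_one_self add.commute)
  also have "y * exp u = 1" by (simp add: y exp_minus)
  finally have "y * u \<le> 1 - y" by (simp add: algebra_simps)
  then have "y / (1 - y) \<le> 1 / u" using u \<open>y < 1\<close> by (simp add: field_simps)
  then show "y / (1 - y) \<le> sqrt (real N) / ln 2" by (simp add: u_def)
qed

text \<open>Rankin's trick; the inequality of exponents is (n - N)(r - 1) >= 0 with N = r^2.\<close>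

lemma half_power_le_rankin:
  assumes N: "1 \<le> N" and n: "N \<le> n"
  shows "(1/2::real) ^ n \<le> 2 powr (- real N + sqrt (real N)) * (2 powr (-1 / sqrt (real N))) ^ n"
proof -
  define r where "r = sqrt (real N)"
  have r: "1 \<le> r" "r * r = real N" using N unfolding r_def by simp_all
  have "(1/2::real) ^ n = 2 powr (- real n)"
    by (simp add: powr_minus powr_realpow power_one_over inverse_eq_divide)
  moreover have "(2 powr (-1 / r)) ^ n = 2 powr (-1 / r * real n)"
    by (simp add: powr_realpow[symmetric] powr_powr)
  moreover have "- real n \<le> - real N + r + (-1 / r * real n)"
  proof -
    have "0 \<le> (real n - real N) * (r - 1)" using n r by simp
    also have "(real n - real N) * (r - 1) = r * (- real N + r + (-1 / r * real n) + real n)"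
      using r by (simp add: field_simps)
    finally show ?thesis using r by (simp add: zero_le_mult_iff)
  qed
  ultimately show ?thesis unfolding r_def[symmetric] by (simp add: powr_add[symmetric])
qed

lemma tail_sum_bound:
  fixes \<alpha> K1 :: real
  assumes \<alpha>: "0 < \<alpha>" and K1: "0 < K1" and f: "smooth_cube s f"
    and hyp: "\<forall>k\<in>idx s. L1norm s (mixed_deriv s k f) \<le> K1 * \<alpha> ^ norm0 s k"
    and N: "1 \<le> N"
  shows "(\<lambda>k. \<bar>fhat s f k\<bar>) summable_on (Nstar s - Q s N)"
    and "(\<Sum>\<^sub>\<infinity>k\<in>Nstar s - Q s N. \<bar>fhat s f k\<bar>)
           < K1 * 2 powr (- real N + (2 + real s * \<alpha> / (ln 2)^2) * sqrt (real N))"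
proof -
  let ?A = "Nstar s - Q s N"
  define r where "r = sqrt (real N)"
  define y where "y = 2 powr (-1 / r)"
  have y: "0 < y" "y < 1" "y / (1 - y) \<le> r / ln 2"
    using rankin_base_bounds[OF N] unfolding y_def r_def by auto
  define w where "w k = \<alpha> ^ norm0 s k * y ^ norm1 s k" for k
  define c where "c = K1 * 2 powr (- real N + r)"
  have A: "?A \<subseteq> idx s" by (auto simp: Nstar_def)
  have w_idx: "w summable_on idx s" "(\<Sum>\<^sub>\<infinity>k\<in>idx s. w k) \<le> exp (\<alpha> * y / (1 - y)) ^ s"
    using weight_summable_on_idx[of \<alpha> y s] \<alpha> y unfolding w_def by auto
  have w_summable: "w summable_on ?A" by (rule summable_on_subset_banach[OF w_idx(1) A])
  have bound: "\<bar>fhat s f k\<bar> \<le> c * w k" if "k \<in> ?A" for k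
  proof -
    have k: "k \<in> idx s" "N \<le> norm1 s k" using that A by (auto simp: Q_def)
    have "\<bar>fhat s f k\<bar> \<le> (1/2) ^ norm1 s k * (K1 * \<alpha> ^ norm0 s k)"
      using abs_fhat_le[OF f k(1)] hyp k(1) by (auto elim!: order_trans intro!: mult_left_mono)
    also have "\<dots> \<le> (2 powr (- real N + r) * y ^ norm1 s k) * (K1 * \<alpha> ^ norm0 s k)"
      using half_power_le_rankin[OF N k(2)] K1 \<alpha> unfolding r_def y_def
      by (intro mult_right_mono) auto
    also have "\<dots> = c * w k" by (simp add: c_def w_def)
    finally show ?thesis .
  qed
  have c_w_summable: "(\<lambda>k. c * w k) summable_on ?A"
    by (rule summable_on_cmult_right[OF w_summable])
  show summable: "(\<lambda>k. \<bar>fhat s f k\<bar>) summable_on ?A"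
    by (rule summable_on_comparison_test[OF c_w_summable]) (use bound in auto)
  have "(\<Sum>\<^sub>\<infinity>k\<in>?A. \<bar>fhat s f k\<bar>) \<le> c * (\<Sum>\<^sub>\<infinity>k\<in>?A. w k)"
    using infsum_mono[OF summable c_w_summable bound] infsum_cmult_right[OF w_summable] by simp
  also have "\<dots> \<le> c * (\<Sum>\<^sub>\<infinity>k\<in>idx s. w k)"
    using \<alpha> y K1 A by (intro mult_left_mono infsum_mono2[OF w_summable w_idx(1)]) (auto simp: c_def w_def)
  also have "\<dots> \<le> c * exp (\<alpha> * (r / ln 2)) ^ s"
  proof (rule mult_left_mono)
    have "exp (\<alpha> * y / (1 - y)) \<le> exp (\<alpha> * (r / ln 2))"
      using mult_left_mono[OF y(3), of \<alpha>] \<alpha> by simp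
    from power_mono[OF this, of s] show "(\<Sum>\<^sub>\<infinity>k\<in>idx s. w k) \<le> exp (\<alpha> * (r / ln 2)) ^ s"
      using w_idx(2) by simp
  qed (use K1 in \<open>simp add: c_def\<close>)
  also have "\<dots> = K1 * 2 powr (- real N + (1 + real s * \<alpha> / (ln 2)^2) * r)"
    by (simp add: c_def exp_of_nat_mult[symmetric] powr_def power2_eq_square exp_add[symmetric]
        algebra_simps)
  also have "\<dots> < K1 * 2 powr (- real N + (2 + real s * \<alpha> / (ln 2)^2) * r)"
    using K1 N by (simp add: r_def)
  finally show "(\<Sum>\<^sub>\<infinity>k\<in>?A. \<bar>fhat s f k\<bar>) < K1 * 2 powr (- real N + (2 + real s * \<alpha> / (ln 2)^2) * sqrt (real N))"
    by (simp add: r_def)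
qed

lemma abs_infsum_Zk_Sk_le:
  assumes summable: "(\<lambda>k. \<bar>fhat s f k\<bar>) summable_on A"
  shows "\<bar>\<Sum>\<^sub>\<infinity>k\<in>A. Zk s m C k * Sk s D k * fhat s f k\<bar> \<le> (\<Sum>\<^sub>\<infinity>k\<in>A. \<bar>fhat s f k\<bar>)"
proof -
  let ?g = "\<lambda>k. Zk s m C k * Sk s D k * fhat s f k"
  have le: "norm (?g k) \<le> \<bar>fhat s f k\<bar>" for k
    by (simp add: Zk_def Sk_def abs_mult)
  have norm_summable: "(\<lambda>k. norm (?g k)) summable_on A"
    by (rule summable_on_comparison_test[OF summable]) (use le in auto)
  have "\<bar>infsum ?g A\<bar> \<le> infsum (\<lambda>k. norm (?g k)) A"
    using norm_infsum_bound[of ?g A] norm_summable by simp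
  also have "\<dots> \<le> (\<Sum>\<^sub>\<infinity>k\<in>A. \<bar>fhat s f k\<bar>)"
    by (rule infsum_mono[OF norm_summable summable le])
  finally show ?thesis .
qed

section \<open>The cut-off \<open>N\<^sub>m\<close>\<close>

lemma finite_Q: "finite (Q s N)"
proof -
  have "k i < 2 ^ N" if k: "k \<in> Q s N" and i: "i < s" for k i
  proof (rule less_power_of_two_if_kappa_le, rule ballI)
    fix l assume "l \<in> kappa (k i)"
    then have "l \<le> (\<Sum>l\<in>kappa (k i). l)" by (intro member_le_sum) auto
    also have "\<dots> \<le> norm1 s k"
      unfolding norm1_def using i by (intro member_le_sum[of i "{..<s}" "\<lambda>i. \<Sum>l\<in>kappa (k i). l"]) auto
    finally show "l \<le> N" using k by (simp add: Q_def)
  qed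
  then have "restrict k {..<s} \<in> PiE {..<s} (\<lambda>_. {..<2 ^ N})" if "k \<in> Q s N" for k
    using that by (simp only: restrict_PiE_iff) simp
  then have "(\<lambda>k. restrict k {..<s}) ` Q s N \<subseteq> PiE {..<s} (\<lambda>_. {..<2 ^ N})" by blast
  then have "finite ((\<lambda>k. restrict k {..<s}) ` Q s N)"
    by (rule finite_subset) (auto intro: finite_PiE)
  moreover have "Q s N \<subseteq> idx s" by (auto simp: Q_def Nstar_def)
  ultimately show ?thesis
    using finite_imageD inj_on_subset[OF inj_on_restrict_idx] by blast
qed

lemma card_Q_ge:
  assumes s: "1 \<le> s"
  shows "N \<le> card (Q s N)"
proof -
  define e where "e l = (\<lambda>i::nat. if i = 0 then (2::nat) ^ (l - 1) else 0)" for l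
  have inj: "inj_on e {1..N}"
  proof (rule inj_onI)
    fix l l' assume l: "l \<in> {1..N}" "l' \<in> {1..N}" and eq: "e l = e l'"
    have "(2::nat) ^ (l - 1) = 2 ^ (l' - 1)" using fun_cong[OF eq, of 0] by (simp add: e_def)
    then have "l - 1 = l' - 1" by (simp add: power_inject_exp)
    then show "l = l'" using l by auto
  qed
  have "e ` {1..N} \<subseteq> Q s N"
  proof
    fix k assume "k \<in> e ` {1..N}"
    then obtain l where l: "1 \<le> l" "l \<le> N" "k = e l" by auto
    have "norm1 s k = (\<Sum>l\<in>kappa (k 0). l) + (\<Sum>i\<in>{..<s}-{0}. \<Sum>l\<in>kappa (k i). l)"
      unfolding norm1_def using s by (intro sum.remove) auto
    also have "\<dots> = l" using l kappa_power_of_two[of l] by (simp add: e_def)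
    finally have "norm1 s k \<le> N" using l by simp
    moreover have "k \<in> idx s" "k 0 \<noteq> 0" "0 < s" using l s by (auto simp: idx_def e_def)
    ultimately show "k \<in> Q s N" unfolding Q_def Nstar_def by blast
  qed
  then have "card (e ` {1..N}) \<le> card (Q s N)" by (rule card_mono[OF finite_Q])
  then show ?thesis using card_image[OF inj] by simp
qed

lemma eventually_Nm_ge_1:
  assumes s: "1 \<le> s" and B: "0 < B"
  shows "\<forall>\<^sub>F m in sequentially. 1 \<le> Nm s B m"
proof -
  define c where "c = c_s s B"
  have c: "0 < c" using s B by (simp add: c_def c_s_def lam_def)
  have large_m: "1 \<le> Nm s B m" if m: "real (card (Q s 1)) / c \<le> real m" for m
  proof -
    let ?S = "{N. real (card (Q s N)) \<le> c * real m * 2 ^ m}"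
    have "real (card (Q s 1)) \<le> c * real m * 1" using m c by (simp add: divide_le_eq mult.commute)
    also have "\<dots> \<le> c * real m * 2 ^ m" using c by (intro mult_left_mono) auto
    finally have "1 \<in> ?S" by simp
    moreover have "bdd_above ?S"
    proof (rule bdd_aboveI)
      fix N assume "N \<in> ?S"
      then have "real N \<le> c * real m * 2 ^ m" using card_Q_ge[OF s, of N] by (simp add: order_trans)
      then show "N \<le> nat \<lceil>c * real m * 2 ^ m\<rceil>" by linarith
    qed
    ultimately show ?thesis by (simp add: Nm_def c_def cSup_upper)
  qed
  show ?thesis
  proof (rule eventually_sequentiallyI)
    fix m assume "nat \<lceil>real (card (Q s 1)) / c\<rceil> \<le> m"
    then show "1 \<le> Nm s B m" by (intro large_m) linarith
  qed
qed

theorem theorem3: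
  fixes s :: nat and A B \<alpha> :: real
  assumes "s \<ge> 1" and "AB_ok s A B" and "\<alpha> > 0"
  shows "\<exists>D1 :: real. \<exists>m1 :: nat. \<forall>K1 f m C D.
     K1 > 0 \<longrightarrow> smooth_cube s f \<longrightarrow>
     (\<forall>k\<in>idx s. L1norm s (mixed_deriv s k f) \<le> K1 * \<alpha> ^ norm0 s k) \<longrightarrow>
     m \<ge> m1 \<longrightarrow>
       (\<lambda>k. \<bar>fhat s f k\<bar>) summable_on (Nstar s - Q s (Nm s B m)) \<and>
       \<bar>\<Sum>\<^sub>\<infinity>k\<in>Nstar s - Q s (Nm s B m). Zk s m C k * Sk s D k * fhat s f k\<bar>
         \<le> (\<Sum>\<^sub>\<infinity>k\<in>Nstar s - Q s (Nm s B m). \<bar>fhat s f k\<bar>) \<and>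
       (\<Sum>\<^sub>\<infinity>k\<in>Nstar s - Q s (Nm s B m). \<bar>fhat s f k\<bar>)
         < K1 * 2 powr (- real (Nm s B m) + D1 * sqrt (real (Nm s B m)))"
proof -
  \<comment> \<open>of the bound on XOR probabilities only \<open>B > 0\<close> matters here: it makes \<open>c_s\<close> positive\<close>
  have "0 < B" using assms(2) by (simp add: AB_ok_def)
  then obtain m1 where m1: "\<And>m. m1 \<le> m \<Longrightarrow> 1 \<le> Nm s B m"
    using eventually_Nm_ge_1[OF assms(1)] unfolding eventually_sequentially by blast
  show ?thesis
  proof (intro exI[of _ "2 + real s * \<alpha> / (ln 2)^2"] exI[of _ m1] allI impI)
    fix K1 :: real and f m C D
    assume "K1 > 0" "smooth_cube s f" "\<forall>k\<in>idx s. L1norm s (mixed_deriv s k f) \<le> K1 * \<alpha> ^ norm0 s k"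
      and "m1 \<le> m"
    note tail = tail_sum_bound[OF assms(3) this(1-3) m1[OF this(4)]]
    then show "(\<lambda>k. \<bar>fhat s f k\<bar>) summable_on (Nstar s - Q s (Nm s B m)) \<and>
       \<bar>\<Sum>\<^sub>\<infinity>k\<in>Nstar s - Q s (Nm s B m). Zk s m C k * Sk s D k * fhat s f k\<bar>
         \<le> (\<Sum>\<^sub>\<infinity>k\<in>Nstar s - Q s (Nm s B m). \<bar>fhat s f k\<bar>) \<and>
       (\<Sum>\<^sub>\<infinity>k\<in>Nstar s - Q s (Nm s B m). \<bar>fhat s f k\<bar>)
         < K1 * 2 powr (- real (Nm s B m) + (2 + real s * \<alpha> / (ln 2)^2) * sqrt (real (Nm s B m)))"
      using abs_infsum_Zk_Sk_le[OF tail(1)] by blast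
  qed
qed

end
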